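(* Let $\Omega$ be a Polish space and $T\in\mathscr{L}(\mathscr{M}(\Omega),\sigma)$ with associated transition kernel $k$. Then the positive part $T^+$ of $T$ taken in the vector lattice $\mathscr{L}(\mathscr{M}(\Omega))$ is weakly continuous, and its associated transition kernel is $k_+$, i.e. $(T^+\mu)(A)=\int_\Omega k_+(x,A)\,d\mu(x)$. In particular, $\mathscr{L}(\mathscr{M}(\Omega),\sigma)$ is a sublattice of $\mathscr{L}(\mathscr{M}(\Omega))$.
   Context: $\mathscr{M}(\Omega)$ is the Banach lattice of finite signed Borel measures; $\mathscr{L}(\mathscr{M}(\Omega))$ is the Banach lattice of bounded operators on it, ordered by $S\le T$ iff $S\mu\le T\mu$ for all positive $\mu$. A transition kernel is a map $k:\Omega\times\mathscr{B}(\Omega)\to\mathbb{R}$, finite signed measure in the second variable and Borel measurable in the first; bounded if $\sup_x\lvert k\rvert(x,\Omega)<\infty$. $T$ is weakly continuous with associated kernel $k$ if $k$ is a bounded transition kernel and $(T\mu)(A)=\int k(x,A)\,d\mu(x)$ for all $\mu,A$; $\mathscr{L}(\mathscr{M}(\Omega),\sigma)$ denotes the space of weakly continuous operators. $k_+(x,\cdot)$ is the positive part of the signed measure $k(x,\cdot)$. *)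

theory Defs
  imports "HOL-Analysis.Analysis"
begin

text \<open>Finite signed Borel measures on a Polish space (the whole type 'a), represented
  as real-valued set functions that are countably additive on the Borel sets.\<close>

definition signed_measure :: "('a::topological_space set \<Rightarrow> real) \<Rightarrow> bool" where
  "signed_measure \<mu> \<longleftrightarrow> \<mu> {} = 0 \<and>
     (\<forall>F::nat \<Rightarrow> 'a set. range F \<subseteq> sets borel \<longrightarrow> disjoint_family F \<longrightarrow>
        (\<lambda>n. \<mu> (F n)) sums \<mu> (\<Union>n. F n))"

definition pos_part :: "('a::topological_space set \<Rightarrow> real) \<Rightarrow> 'a set \<Rightarrow> real" where
  "pos_part \<mu> A = (SUP B\<in>{B\<in>sets borel. B \<subseteq> A}. \<mu> B)"

definition neg_part :: "('a::topological_space set \<Rightarrow> real) \<Rightarrow> 'a set \<Rightarrow> real" where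
  "neg_part \<mu> A = pos_part (\<lambda>B. - \<mu> B) A"

definition tv_norm :: "('a::topological_space set \<Rightarrow> real) \<Rightarrow> real" where
  "tv_norm \<mu> = pos_part \<mu> UNIV + neg_part \<mu> UNIV"

definition pos_meas :: "('a::topological_space set \<Rightarrow> real) \<Rightarrow> 'a measure" where
  "pos_meas \<mu> = measure_of UNIV (sets borel) (\<lambda>A. ennreal (pos_part \<mu> A))"

definition neg_meas :: "('a::topological_space set \<Rightarrow> real) \<Rightarrow> 'a measure" where
  "neg_meas \<mu> = measure_of UNIV (sets borel) (\<lambda>A. ennreal (neg_part \<mu> A))"

definition sintegral :: "('a::topological_space set \<Rightarrow> real) \<Rightarrow> ('a \<Rightarrow> real) \<Rightarrow> real" where
  "sintegral \<mu> f = integral\<^sup>L (pos_meas \<mu>) f - integral\<^sup>L (neg_meas \<mu>) f"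

type_synonym 'a meas_op = "('a set \<Rightarrow> real) \<Rightarrow> ('a set \<Rightarrow> real)"

definition bounded_meas_op :: "'a::topological_space meas_op \<Rightarrow> bool" where
  "bounded_meas_op T \<longleftrightarrow>
     (\<forall>\<mu>. signed_measure \<mu> \<longrightarrow> signed_measure (T \<mu>)) \<and>
     (\<forall>\<mu> \<nu> a b. signed_measure \<mu> \<longrightarrow> signed_measure \<nu> \<longrightarrow>
        (\<forall>A\<in>sets borel. T (\<lambda>B. a * \<mu> B + b * \<nu> B) A = a * T \<mu> A + b * T \<nu> A)) \<and>
     (\<exists>C. \<forall>\<mu>. signed_measure \<mu> \<longrightarrow> tv_norm (T \<mu>) \<le> C * tv_norm \<mu>)"

definition op_le :: "'a::topological_space meas_op \<Rightarrow> 'a meas_op \<Rightarrow> bool" where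
  "op_le S T \<longleftrightarrow> (\<forall>\<mu>. signed_measure \<mu> \<longrightarrow> (\<forall>A\<in>sets borel. 0 \<le> \<mu> A) \<longrightarrow>
       (\<forall>A\<in>sets borel. S \<mu> A \<le> T \<mu> A))"

definition zero_op :: "'a meas_op" where
  "zero_op = (\<lambda>\<mu> A. 0)"

definition is_pos_part_op :: "'a::topological_space meas_op \<Rightarrow> 'a meas_op \<Rightarrow> bool" where
  "is_pos_part_op T P \<longleftrightarrow> bounded_meas_op P \<and> op_le T P \<and> op_le zero_op P \<and>
     (\<forall>S. bounded_meas_op S \<longrightarrow> op_le T S \<longrightarrow> op_le zero_op S \<longrightarrow> op_le P S)"

definition transition_kernel :: "('a::topological_space \<Rightarrow> 'a set \<Rightarrow> real) \<Rightarrow> bool" where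
  "transition_kernel k \<longleftrightarrow> (\<forall>x. signed_measure (k x)) \<and>
     (\<forall>A\<in>sets borel. (\<lambda>x. k x A) \<in> borel_measurable borel)"

definition bounded_transition_kernel :: "('a::topological_space \<Rightarrow> 'a set \<Rightarrow> real) \<Rightarrow> bool" where
  "bounded_transition_kernel k \<longleftrightarrow> transition_kernel k \<and> (\<exists>C. \<forall>x. tv_norm (k x) \<le> C)"

definition weakly_continuous_with_kernel ::
  "'a::topological_space meas_op \<Rightarrow> ('a \<Rightarrow> 'a set \<Rightarrow> real) \<Rightarrow> bool" where
  "weakly_continuous_with_kernel T k \<longleftrightarrow> bounded_transition_kernel k \<and>
     (\<forall>\<mu>. signed_measure \<mu> \<longrightarrow> (\<forall>A\<in>sets borel. T \<mu> A = sintegral \<mu> (\<lambda>x. k x A)))"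

end

theory Submission
  imports Defs
begin

text \<open>
  For a positive measure \<open>\<nu>\<close>, the operator \<open>P\<nu> = \<integral> k\<^sub>+(x, \<cdot>) d\<nu>(x)\<close> clearly dominates both
  \<open>T\<nu>\<close> and \<open>0\<close>; the content of the theorem is that it is the least such bounded operator.
  Fix a countable algebra \<open>C\<^sub>0, C\<^sub>1, \<dots>\<close> generating the Borel sets.  Approximating the
  positive Hahn set of \<open>k(x, \<cdot>)\<close> inside \<open>A\<close> by the \<open>C\<^sub>i\<close> shows that
  \<open>k\<^sub>+(x, A)\<close> is the increasing limit of the running maxima
  \<open>h\<^sub>n(x) = max(0, k(x, C\<^sub>0 \<inter> A), \<dots>, k(x, C\<^sub>n\<^sub>-\<^sub>1 \<inter> A))\<close>, which are measurable in \<open>x\<close>;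
  so \<open>k\<^sub>+\<close> is again a bounded kernel.  If \<open>S \<ge> T\<close> and \<open>S \<ge> 0\<close>, then
  \<open>\<integral> h\<^sub>n d\<nu> \<le> S\<nu>(A)\<close> for every positive \<open>\<nu>\<close>, by induction on \<open>n\<close>: restricting \<open>\<nu>\<close> to
  \<open>E = {h\<^sub>n < k(\<cdot>, D)}\<close> and to its complement, where \<open>D = C\<^sub>n \<inter> A\<close>, gives
  \<open>\<integral> h\<^sub>n\<^sub>+\<^sub>1 d\<nu> = T(\<nu>|E)(D) + \<integral> h\<^sub>n d(\<nu>|E\<^sup>c) \<le> S(\<nu>|E)(A) + S(\<nu>|E\<^sup>c)(A) = S\<nu>(A)\<close>.
  Dominated convergence then yields \<open>P\<nu>(A) \<le> S\<nu>(A)\<close>.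
\<close>

section \<open>Elementary properties of signed measures\<close>

lemma signed_measure_empty: "signed_measure \<mu> \<Longrightarrow> \<mu> {} = 0"
  by (simp add: signed_measure_def)

lemma signed_measure_sums:
  "signed_measure \<mu> \<Longrightarrow> range F \<subseteq> sets borel \<Longrightarrow> disjoint_family F \<Longrightarrow>
    (\<lambda>n. \<mu> (F n)) sums \<mu> (\<Union>n. F n)"
  by (simp add: signed_measure_def)

lemma signed_measure_Un:
  assumes "signed_measure \<mu>" "A \<in> sets borel" "B \<in> sets borel" "A \<inter> B = {}"
  shows "\<mu> (A \<union> B) = \<mu> A + \<mu> B"
proof -
  have "(\<lambda>n. \<mu> (binaryset A B n)) sums \<mu> (\<Union>n. binaryset A B n)"
    using assms by (intro signed_measure_sums)
      (auto simp: binaryset_def disjoint_family_on_def range_binaryset_eq)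
  moreover have "(\<lambda>n. \<mu> (binaryset A B n)) sums (\<mu> A + \<mu> B)"
    by (rule binaryset_sums) (simp add: signed_measure_empty assms)
  ultimately show ?thesis by (simp add: UN_binaryset_eq sums_unique2)
qed

lemma signed_measure_Int_Diff:
  assumes "signed_measure \<mu>" "A \<in> sets borel" "B \<in> sets borel"
  shows "\<mu> A = \<mu> (A \<inter> B) + \<mu> (A - B)"
proof -
  have "A = (A \<inter> B) \<union> (A - B)" by auto
  then show ?thesis using signed_measure_Un[OF assms(1), of "A \<inter> B" "A - B"] assms by auto
qed

lemma signed_measure_finite_UN:
  assumes "signed_measure \<mu>" "range G \<subseteq> sets borel" "disjoint_family G"
  shows "\<mu> (\<Union>i<(n::nat). G i) = (\<Sum>i<n. \<mu> (G i))"
proof (induction n)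
  case 0
  then show ?case using signed_measure_empty[OF assms(1)] by simp
next
  case (Suc n)
  have "(\<Union>i<Suc n. G i) = (\<Union>i<n. G i) \<union> G n" by (auto simp: lessThan_Suc)
  moreover have "(\<Union>i<n. G i) \<inter> G n = {}"
  proof -
    have "G i \<inter> G n = {}" if "i < n" for i
      using assms(3) that by (simp add: disjoint_family_on_def)
    then show ?thesis by blast
  qed
  ultimately show ?case
    using signed_measure_Un[OF assms(1), of "\<Union>i<n. G i" "G n"] assms(2) Suc by auto
qed

lemma signed_measure_incseq:
  assumes "signed_measure \<mu>" "range F \<subseteq> sets borel" "incseq F"
  shows "(\<lambda>n. \<mu> (F n)) \<longlonglongrightarrow> \<mu> (\<Union>n. F n)"
proof -
  have D: "range (disjointed F) \<subseteq> sets borel"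
    using assms(2) by (rule sets.range_disjointed_sets)
  have "(\<lambda>n. \<Sum>i<n. \<mu> (disjointed F i)) \<longlonglongrightarrow> \<mu> (\<Union>n. F n)"
    using signed_measure_sums[OF assms(1) D disjoint_family_disjointed]
    by (simp add: UN_disjointed_eq sums_def)
  then have "(\<lambda>n. \<Sum>i<Suc n. \<mu> (disjointed F i)) \<longlonglongrightarrow> \<mu> (\<Union>n. F n)"
    by (rule LIMSEQ_Suc)
  moreover have "(\<Sum>i<Suc n. \<mu> (disjointed F i)) = \<mu> (F n)" for n
  proof -
    have "(\<Union>i<Suc n. disjointed F i) = F n"
      using finite_UN_disjointed_eq[of F "Suc n"] assms(3)
      by (auto simp: atLeast0LessThan incseq_def less_Suc_eq_le) blast
    then show ?thesis
      using signed_measure_finite_UN[OF assms(1) D disjoint_family_disjointed, of "Suc n"] by simp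
  qed
  ultimately show ?thesis by simp
qed

lemma signed_measure_decseq:
  assumes "signed_measure \<mu>" "range F \<subseteq> sets borel" "decseq F"
  shows "(\<lambda>n. \<mu> (F n)) \<longlonglongrightarrow> \<mu> (\<Inter>n. F n)"
proof -
  have compl: "\<mu> X = \<mu> UNIV - \<mu> (- X)" if "X \<in> sets borel" for X
    using signed_measure_Int_Diff[OF assms(1) _ that, of UNIV] by (simp add: Compl_eq_Diff_UNIV)
  have "(\<lambda>n. \<mu> (- F n)) \<longlonglongrightarrow> \<mu> (\<Union>n. - F n)"
    using assms by (intro signed_measure_incseq) (auto simp: incseq_def decseq_def)
  also have "(\<Union>n. - F n) = - (\<Inter>n. F n)" by blast
  finally have "(\<lambda>n. \<mu> UNIV - \<mu> (- F n)) \<longlonglongrightarrow> \<mu> UNIV - \<mu> (- (\<Inter>n. F n))"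
    by (rule tendsto_diff[OF tendsto_const])
  moreover have "(\<Inter>n. F n) \<in> sets borel" "F n \<in> sets borel" for n
    using assms(2) by auto
  ultimately show ?thesis by (simp only: compl[symmetric])
qed

lemma signed_measure_linear:
  assumes "signed_measure \<mu>" "signed_measure \<nu>"
  shows "signed_measure (\<lambda>B. a * \<mu> B + b * \<nu> B)"
  unfolding signed_measure_def
proof (intro conjI allI impI)
  show "a * \<mu> {} + b * \<nu> {} = 0" using assms by (simp add: signed_measure_empty)
  fix F :: "nat \<Rightarrow> 'a set" assume "range F \<subseteq> sets borel" "disjoint_family F"
  then show "(\<lambda>n. a * \<mu> (F n) + b * \<nu> (F n)) sums (a * \<mu> (\<Union>n. F n) + b * \<nu> (\<Union>n. F n))"
    using assms by (intro sums_add sums_mult signed_measure_sums)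
qed

lemma signed_measure_uminus: "signed_measure \<mu> \<Longrightarrow> signed_measure (\<lambda>B. - \<mu> B)"
  using signed_measure_linear[of \<mu> \<mu> "-1" 0] by simp

lemma signed_measure_restrict:
  assumes "signed_measure \<mu>" "Y \<in> sets borel"
  shows "signed_measure (\<lambda>A. \<mu> (A \<inter> Y))"
  unfolding signed_measure_def
proof (intro conjI allI impI)
  show "\<mu> ({} \<inter> Y) = 0" using signed_measure_empty[OF assms(1)] by simp
  fix F :: "nat \<Rightarrow> 'a set" assume "range F \<subseteq> sets borel" "disjoint_family F"
  then have "(\<lambda>n. \<mu> (F n \<inter> Y)) sums \<mu> (\<Union>n. F n \<inter> Y)"
    using assms by (intro signed_measure_sums) (auto simp: disjoint_family_on_def)
  then show "(\<lambda>n. \<mu> (F n \<inter> Y)) sums \<mu> ((\<Union>n. F n) \<inter> Y)" by simp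
qed

lemma signed_measure_cong:
  assumes "signed_measure \<mu>" "\<And>A. A \<in> sets borel \<Longrightarrow> \<nu> A = \<mu> A"
  shows "signed_measure \<nu>"
  unfolding signed_measure_def
proof (intro conjI allI impI)
  show "\<nu> {} = 0" using assms by (simp add: signed_measure_empty)
  fix F :: "nat \<Rightarrow> 'a set" assume F: "range F \<subseteq> sets borel" "disjoint_family F"
  then have "(\<Union>n. F n) \<in> sets borel" by auto
  then show "(\<lambda>n. \<nu> (F n)) sums \<nu> (\<Union>n. F n)"
    using signed_measure_sums[OF assms(1) F] F(1) assms(2) by (simp add: range_subsetD)
qed

lemma signed_measure_mono:
  assumes "signed_measure \<mu>" "\<forall>X\<in>sets borel. 0 \<le> \<mu> X"
    and "A \<in> sets borel" "B \<in> sets borel" "B \<subseteq> A"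
  shows "\<mu> B \<le> \<mu> A"
  using signed_measure_Int_Diff[OF assms(1,3,4)] assms by (simp add: Int_absorb1)

section \<open>Boundedness and the Hahn decomposition\<close>

definition bounded_on_subsets :: "('a::topological_space set \<Rightarrow> real) \<Rightarrow> 'a set \<Rightarrow> bool" where
  "bounded_on_subsets \<mu> E \<longleftrightarrow> (\<exists>K. \<forall>B\<in>sets borel. B \<subseteq> E \<longrightarrow> \<bar>\<mu> B\<bar> \<le> K)"

lemma bounded_on_subsets_Un:
  assumes "signed_measure \<mu>" "B \<in> sets borel"
    and "bounded_on_subsets \<mu> B" "bounded_on_subsets \<mu> (E - B)"
  shows "bounded_on_subsets \<mu> E"
proof -
  obtain K1 K2 where K1: "\<forall>C\<in>sets borel. C \<subseteq> B \<longrightarrow> \<bar>\<mu> C\<bar> \<le> K1"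
    and K2: "\<forall>C\<in>sets borel. C \<subseteq> E - B \<longrightarrow> \<bar>\<mu> C\<bar> \<le> K2"
    using assms(3,4) by (auto simp: bounded_on_subsets_def)
  have "\<bar>\<mu> C\<bar> \<le> K1 + K2" if "C \<in> sets borel" "C \<subseteq> E" for C
  proof -
    have "\<mu> C = \<mu> (C \<inter> B) + \<mu> (C - B)"
      using signed_measure_Int_Diff[OF assms(1) that(1) assms(2)] .
    moreover have "\<bar>\<mu> (C \<inter> B)\<bar> \<le> K1"
      using that assms(2) by (intro K1[rule_format]) auto
    moreover have "\<bar>\<mu> (C - B)\<bar> \<le> K2"
      using that assms(2) by (intro K2[rule_format]) auto
    ultimately show ?thesis by linarith
  qed
  then show ?thesis by (auto simp: bounded_on_subsets_def)
qed

lemma unbounded_on_subsets_split: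
  assumes "signed_measure \<mu>" "E \<in> sets borel" "\<not> bounded_on_subsets \<mu> E"
  shows "\<exists>B. B \<in> sets borel \<and> B \<subseteq> E \<and> 1 \<le> \<bar>\<mu> B\<bar> \<and> \<not> bounded_on_subsets \<mu> (E - B)"
proof -
  obtain B where B: "B \<in> sets borel" "B \<subseteq> E" "\<bar>\<mu> E\<bar> + 1 < \<bar>\<mu> B\<bar>"
    using assms(3) unfolding bounded_on_subsets_def by (meson not_le)
  have "\<mu> E = \<mu> B + \<mu> (E - B)"
    using signed_measure_Int_Diff[OF assms(1,2) B(1)] B(2) by (simp add: Int_absorb1)
  then have large: "1 \<le> \<bar>\<mu> B\<bar>" "1 \<le> \<bar>\<mu> (E - B)\<bar>"
    using B(3) by linarith+
  show ?thesis
  proof (cases "bounded_on_subsets \<mu> (E - B)")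
    case True
    then have "\<not> bounded_on_subsets \<mu> B"
      using bounded_on_subsets_Un[OF assms(1) B(1)] assms(3) by blast
    moreover have "E - (E - B) = B" using B(2) by auto
    ultimately show ?thesis
      using large assms(2) B(1) by (intro exI[of _ "E - B"]) auto
  next
    case False
    then show ?thesis using B large by (intro exI[of _ B]) auto
  qed
qed

lemma signed_measure_disjoint_LIMSEQ_0:
  assumes "signed_measure \<mu>" "range F \<subseteq> sets borel" "disjoint_family F"
  shows "(\<lambda>n. \<mu> (F n)) \<longlonglongrightarrow> 0"
  using signed_measure_sums[OF assms] summable_LIMSEQ_zero sums_summable by blast

text \<open>If \<open>\<mu>\<close> were unbounded, splitting off pieces of size at least 1 while keeping the
  remainder unbounded would produce disjoint Borel sets whose measures do not tend to 0.\<close>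

lemma signed_measure_bounded:
  assumes "signed_measure \<mu>"
  shows "\<exists>K. \<forall>A\<in>sets borel. \<bar>\<mu> A\<bar> \<le> K"
proof (rule ccontr)
  assume "\<not> ?thesis"
  then have unbounded: "\<not> bounded_on_subsets \<mu> UNIV"
    by (simp add: bounded_on_subsets_def)
  define g where "g E = (SOME B. B \<in> sets borel \<and> B \<subseteq> E \<and> 1 \<le> \<bar>\<mu> B\<bar> \<and>
    \<not> bounded_on_subsets \<mu> (E - B))" for E
  have g: "g E \<in> sets borel \<and> g E \<subseteq> E \<and> 1 \<le> \<bar>\<mu> (g E)\<bar> \<and> \<not> bounded_on_subsets \<mu> (E - g E)"
    if "E \<in> sets borel" "\<not> bounded_on_subsets \<mu> E" for E
    unfolding g_def by (rule someI_ex) (rule unbounded_on_subsets_split[OF assms that])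
  define E where "E n = ((\<lambda>X. X - g X) ^^ n) UNIV" for n
  have E_Suc: "E (Suc n) = E n - g (E n)" for n
    by (simp add: E_def)
  have E: "E n \<in> sets borel \<and> \<not> bounded_on_subsets \<mu> (E n)" for n
  proof (induction n)
    case 0
    then show ?case using unbounded by (simp add: E_def)
  next
    case (Suc n)
    then show ?case using g[of "E n"] by (auto simp: E_Suc)
  qed
  have piece: "g (E n) \<in> sets borel" "g (E n) \<subseteq> E n" "1 \<le> \<bar>\<mu> (g (E n))\<bar>" for n
    using g[of "E n"] E[of n] by auto
  have "disjoint_family (\<lambda>n. - E (Suc n) - - E n)"
    by (rule disjoint_family_Suc) (auto simp: E_Suc)
  moreover have "- E (Suc n) - - E n = g (E n)" for n
    using piece(2) by (auto simp: E_Suc)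
  ultimately have "(\<lambda>n. \<mu> (g (E n))) \<longlonglongrightarrow> 0"
    using piece(1) by (intro signed_measure_disjoint_LIMSEQ_0[OF assms]) auto
  then obtain n where "\<bar>\<mu> (g (E n))\<bar> < 1"
    using LIMSEQ_D[of _ 0 1] by force
  with piece(3)[of n] show False by simp
qed

lemma bdd_above_signed_measure:
  assumes "signed_measure \<mu>" "X \<subseteq> sets borel"
  shows "bdd_above (\<mu> ` X)"
proof -
  obtain K where "\<forall>A\<in>sets borel. \<bar>\<mu> A\<bar> \<le> K" using signed_measure_bounded[OF assms(1)] by blast
  then show ?thesis using assms(2) by (intro bdd_aboveI[of _ K]) (auto simp: abs_le_iff)
qed

lemma signed_measure_Inter_ge:
  assumes "signed_measure \<mu>" "\<And>n. E n \<in> sets borel"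
    and "\<And>X. X \<in> sets borel \<Longrightarrow> \<mu> X \<le> \<gamma>" "\<And>n. \<gamma> - 1 / 2^n < \<mu> (E n)"
    and "m \<le> n"
  shows "\<gamma> - 2 / 2^m + 1 / 2^n \<le> \<mu> (\<Inter>i\<in>{m..n}. E i)"
  using \<open>m \<le> n\<close>
proof (induction rule: dec_induct)
  case base
  then show ?case using assms(4)[of m] by (simp add: field_simps)
next
  case (step i)
  define F where "F = (\<Inter>j\<in>{m..i}. E j)"
  have F: "F \<in> sets borel"
    unfolding F_def using assms(2) \<open>m \<le> i\<close> by (intro sets.finite_INT) auto
  have F_Suc: "(\<Inter>j\<in>{m..Suc i}. E j) = F \<inter> E (Suc i)"
    using \<open>m \<le> i\<close> by (auto simp: F_def le_Suc_eq)
  have "\<mu> (E (Suc i) \<union> F) = \<mu> (E (Suc i)) + \<mu> (F - E (Suc i))"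
    using signed_measure_Un[OF assms(1), of "E (Suc i)" "F - E (Suc i)"] F assms(2)
    by (simp add: Un_Diff_cancel)
  moreover have "\<mu> F = \<mu> (F \<inter> E (Suc i)) + \<mu> (F - E (Suc i))"
    using signed_measure_Int_Diff[OF assms(1) F assms(2)] .
  moreover have "\<mu> (E (Suc i) \<union> F) \<le> \<gamma>" using F assms(2,3) by auto
  moreover define d :: real where "d = 1 / 2 ^ i"
  moreover have "\<gamma> - d / 2 < \<mu> (E (Suc i))"
    using assms(4)[of "Suc i"] by (simp add: d_def)
  moreover have "\<gamma> - 2 / 2^m + d \<le> \<mu> F" using step.IH by (simp add: F_def d_def)
  ultimately have "\<gamma> - 2 / 2^m + d / 2 \<le> \<mu> (F \<inter> E (Suc i))"
    by linarith
  then show ?case unfolding F_Suc by (simp add: d_def)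
qed

text \<open>The supremum of \<open>\<mu>\<close> over the Borel sets is attained on the union of the
  tails \<open>\<Inter>i\<ge>m. E i\<close> of a maximising sequence whose defects decay like \<open>2\<^sup>-\<^sup>n\<close>.\<close>

lemma signed_measure_attains_max:
  assumes "signed_measure \<mu>"
  shows "\<exists>Y\<in>sets borel. \<forall>X\<in>sets borel. \<mu> X \<le> \<mu> Y"
proof -
  define \<gamma> where "\<gamma> = (SUP X\<in>sets borel. \<mu> X)"
  have bdd: "bdd_above (\<mu> ` sets borel)"
    using bdd_above_signed_measure[OF assms] by simp
  have le_\<gamma>: "\<mu> X \<le> \<gamma>" if "X \<in> sets borel" for X
    unfolding \<gamma>_def using bdd that by (rule cSUP_upper2) simp
  have "\<exists>X\<in>sets borel. \<gamma> - 1 / 2^n < \<mu> X" for n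
    unfolding \<gamma>_def using bdd by (intro less_cSUP_iff[THEN iffD1]) auto
  then obtain E where E: "\<And>n. E n \<in> sets borel" "\<And>n. \<gamma> - 1 / 2^n < \<mu> (E n)"
    by metis
  define F where "F m = (\<Inter>i\<in>{m..}. E i)" for m
  have F: "F m \<in> sets borel" for m
    using E(1) by (auto simp: F_def)
  have F_ge: "\<gamma> - 2 / 2^m + 0 \<le> \<mu> (F m)" for m
  proof (rule LIMSEQ_le)
    show "(\<lambda>n. \<gamma> - 2 / 2^m + 1 / 2^n) \<longlonglongrightarrow> \<gamma> - 2 / 2^m + 0"
      by (intro tendsto_add tendsto_const LIMSEQ_divide_realpow_zero) simp_all
    have "(\<Inter>i\<in>{m..n}. E i) \<in> sets borel" for n
      using E(1) by (cases "m \<le> n") (auto intro: sets.finite_INT)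
    moreover have "(\<Inter>n. \<Inter>i\<in>{m..n}. E i) = F m"
      by (auto simp: F_def) (metis atLeastAtMost_iff order_refl)
    moreover have "decseq (\<lambda>n. \<Inter>i\<in>{m..n}. E i)"
      unfolding decseq_def by (intro allI impI INT_anti_mono) auto
    ultimately show "(\<lambda>n. \<mu> (\<Inter>i\<in>{m..n}. E i)) \<longlonglongrightarrow> \<mu> (F m)"
      using signed_measure_decseq[OF assms, of "\<lambda>n. \<Inter>i\<in>{m..n}. E i"] by auto
    show "\<exists>N. \<forall>n\<ge>N. \<gamma> - 2 / 2^m + 1 / 2^n \<le> \<mu> (\<Inter>i\<in>{m..n}. E i)"
      using signed_measure_Inter_ge[OF assms E(1) le_\<gamma> E(2)] by blast
  qed
  have max: "\<gamma> - 0 \<le> \<mu> (\<Union>m. F m)"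
  proof (rule LIMSEQ_le)
    show "(\<lambda>m. \<gamma> - 2 / 2^m) \<longlonglongrightarrow> \<gamma> - 0"
      by (intro tendsto_diff tendsto_const LIMSEQ_divide_realpow_zero) simp_all
    show "(\<lambda>m. \<mu> (F m)) \<longlonglongrightarrow> \<mu> (\<Union>m. F m)"
      using F by (intro signed_measure_incseq[OF assms]) (auto simp: incseq_def F_def)
  qed (use F_ge in auto)
  have "(\<Union>m. F m) \<in> sets borel" using F by auto
  then show ?thesis using le_\<gamma> max by (intro bexI[of _ "\<Union>m. F m"] ballI) force+
qed

definition hahn_set :: "('a::topological_space set \<Rightarrow> real) \<Rightarrow> 'a set \<Rightarrow> bool" where
  "hahn_set \<mu> Y \<longleftrightarrow> Y \<in> sets borel \<and> (\<forall>X\<in>sets borel. X \<subseteq> Y \<longrightarrow> 0 \<le> \<mu> X) \<and>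
     (\<forall>X\<in>sets borel. X \<inter> Y = {} \<longrightarrow> \<mu> X \<le> 0)"

lemma hahn_set_if_max:
  assumes "signed_measure \<mu>" "Y \<in> sets borel" "\<And>X. X \<in> sets borel \<Longrightarrow> \<mu> X \<le> \<mu> Y"
  shows "hahn_set \<mu> Y"
  unfolding hahn_set_def
proof (intro conjI ballI impI)
  fix X assume X: "X \<in> sets borel" "X \<subseteq> Y"
  then have "\<mu> Y = \<mu> X + \<mu> (Y - X)"
    using signed_measure_Int_Diff[OF assms(1,2) X(1)] by (simp add: Int_absorb1)
  moreover have "\<mu> (Y - X) \<le> \<mu> Y" using assms(2,3) X by auto
  ultimately show "0 \<le> \<mu> X" by simp
next
  fix X assume X: "X \<in> sets borel" "X \<inter> Y = {}"
  then have "\<mu> (Y \<union> X) = \<mu> Y + \<mu> X"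
    using signed_measure_Un[OF assms(1,2) X(1)] by (simp add: Int_commute)
  moreover have "\<mu> (Y \<union> X) \<le> \<mu> Y" using assms(2,3) X by auto
  ultimately show "\<mu> X \<le> 0" by simp
qed (fact assms(2))

lemma ex_hahn_set:
  assumes "signed_measure \<mu>"
  obtains Y where "hahn_set \<mu> Y"
  using signed_measure_attains_max[OF assms] hahn_set_if_max[OF assms] by blast

lemma hahn_set_uminus: "hahn_set \<mu> Y \<Longrightarrow> hahn_set (\<lambda>B. - \<mu> B) (- Y)"
  unfolding hahn_set_def by (auto simp: disjoint_eq_subset_Compl Compl_eq_Diff_UNIV)

lemma hahn_set_UNIV:
  "signed_measure \<mu> \<Longrightarrow> \<forall>X\<in>sets borel. 0 \<le> \<mu> X \<Longrightarrow> hahn_set \<mu> UNIV"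
  unfolding hahn_set_def by (simp add: signed_measure_empty)

section \<open>The Jordan decomposition\<close>

lemma le_pos_part:
  assumes "signed_measure \<mu>" "B \<in> sets borel" "B \<subseteq> A"
  shows "\<mu> B \<le> pos_part \<mu> A"
  unfolding pos_part_def
  using assms bdd_above_signed_measure[OF assms(1), of "{B \<in> sets borel. B \<subseteq> A}"]
  by (intro cSUP_upper) auto

lemma pos_part_nonneg: "signed_measure \<mu> \<Longrightarrow> 0 \<le> pos_part \<mu> A"
  using le_pos_part[of \<mu> "{}" A] by (simp add: signed_measure_empty)

lemma neg_part_nonneg: "signed_measure \<mu> \<Longrightarrow> 0 \<le> neg_part \<mu> A"
  unfolding neg_part_def by (intro pos_part_nonneg signed_measure_uminus)

lemma pos_part_hahn:
  assumes "signed_measure \<mu>" "hahn_set \<mu> Y" "A \<in> sets borel"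
  shows "pos_part \<mu> A = \<mu> (A \<inter> Y)"
  unfolding pos_part_def
proof (rule cSup_eq_maximum)
  have Y: "Y \<in> sets borel" using assms(2) by (simp add: hahn_set_def)
  then show "\<mu> (A \<inter> Y) \<in> \<mu> ` {B \<in> sets borel. B \<subseteq> A}" using assms(3) by auto
  fix x assume "x \<in> \<mu> ` {B \<in> sets borel. B \<subseteq> A}"
  then obtain B where B: "B \<in> sets borel" "B \<subseteq> A" "x = \<mu> B" by auto
  have "\<mu> B = \<mu> (B \<inter> Y) + \<mu> (B - Y)"
    using signed_measure_Int_Diff[OF assms(1) B(1) Y] .
  moreover have "\<mu> (A \<inter> Y) = \<mu> (B \<inter> Y) + \<mu> (A \<inter> Y - B)"
  proof -
    have "A \<inter> Y \<inter> B = B \<inter> Y" using B(2) by auto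
    then show ?thesis
      using signed_measure_Int_Diff[OF assms(1) _ B(1), of "A \<inter> Y"] assms(3) Y by auto
  qed
  moreover have "\<mu> (B - Y) \<le> 0"
    using assms(2) B(1) Y unfolding hahn_set_def by auto
  moreover have "0 \<le> \<mu> (A \<inter> Y - B)"
  proof -
    have "A \<inter> Y - B \<in> sets borel" "A \<inter> Y - B \<subseteq> Y" using assms(3) B(1) Y by auto
    then show ?thesis using assms(2) unfolding hahn_set_def by blast
  qed
  ultimately show "x \<le> \<mu> (A \<inter> Y)" using B(3) by linarith
qed

lemma neg_part_hahn:
  assumes "signed_measure \<mu>" "hahn_set \<mu> Y" "A \<in> sets borel"
  shows "neg_part \<mu> A = - \<mu> (A - Y)"
  using pos_part_hahn[OF signed_measure_uminus[OF assms(1)] hahn_set_uminus[OF assms(2)] assms(3)]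
  by (simp add: neg_part_def Diff_eq)

lemma signed_measure_pos_part:
  assumes "signed_measure \<mu>"
  shows "signed_measure (pos_part \<mu>)"
proof -
  obtain Y where Y: "hahn_set \<mu> Y" using ex_hahn_set[OF assms] .
  then have "Y \<in> sets borel" by (simp add: hahn_set_def)
  then show ?thesis
    using signed_measure_restrict[OF assms] pos_part_hahn[OF assms Y]
    by (rule_tac signed_measure_cong) auto
qed

lemma signed_measure_neg_part: "signed_measure \<mu> \<Longrightarrow> signed_measure (neg_part \<mu>)"
  unfolding neg_part_def[abs_def] by (intro signed_measure_pos_part signed_measure_uminus)

lemma signed_measure_eq_pos_part_minus_neg_part:
  assumes "signed_measure \<mu>" "A \<in> sets borel"
  shows "\<mu> A = pos_part \<mu> A - neg_part \<mu> A"
proof -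
  obtain Y where Y: "hahn_set \<mu> Y" using ex_hahn_set[OF assms(1)] .
  then have "Y \<in> sets borel" by (simp add: hahn_set_def)
  then show ?thesis
    using pos_part_hahn[OF assms(1) Y assms(2)] neg_part_hahn[OF assms(1) Y assms(2)]
      signed_measure_Int_Diff[OF assms] by simp
qed

lemma pos_part_le_UNIV:
  assumes "signed_measure \<mu>" "A \<in> sets borel"
  shows "pos_part \<mu> A \<le> pos_part \<mu> UNIV"
proof -
  obtain Y where Y: "hahn_set \<mu> Y" using ex_hahn_set[OF assms(1)] .
  then have "Y \<in> sets borel" by (simp add: hahn_set_def)
  then show ?thesis
    using pos_part_hahn[OF assms(1) Y assms(2)] assms by (auto intro: le_pos_part)
qed

lemma neg_part_le_UNIV: "signed_measure \<mu> \<Longrightarrow> A \<in> sets borel \<Longrightarrow> neg_part \<mu> A \<le> neg_part \<mu> UNIV"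
  unfolding neg_part_def by (intro pos_part_le_UNIV signed_measure_uminus)

lemma pos_part_eq_self:
  assumes "signed_measure \<mu>" "\<forall>X\<in>sets borel. 0 \<le> \<mu> X" "A \<in> sets borel"
  shows "pos_part \<mu> A = \<mu> A"
  using pos_part_hahn[OF assms(1) hahn_set_UNIV[OF assms(1,2)] assms(3)] by simp

lemma neg_part_eq_0:
  assumes "signed_measure \<mu>" "\<forall>X\<in>sets borel. 0 \<le> \<mu> X" "A \<in> sets borel"
  shows "neg_part \<mu> A = 0"
  using neg_part_hahn[OF assms(1) hahn_set_UNIV[OF assms(1,2)] assms(3)]
  by (simp add: signed_measure_empty[OF assms(1)])

lemma
  shows sets_pos_meas [simp]: "sets (pos_meas \<mu>) = sets borel"
    and space_pos_meas [simp]: "space (pos_meas \<mu>) = UNIV"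
    and sets_neg_meas [simp]: "sets (neg_meas \<mu>) = sets borel"
    and space_neg_meas [simp]: "space (neg_meas \<mu>) = UNIV"
  using sets.sets_measure_of_eq[of borel] sets.space_measure_of_eq[of borel]
  by (simp_all add: pos_meas_def neg_meas_def)

lemma neg_meas_eq_pos_meas: "neg_meas \<mu> = pos_meas (\<lambda>B. - \<mu> B)"
  by (simp add: neg_meas_def pos_meas_def neg_part_def[abs_def])

lemma emeasure_pos_meas:
  assumes "signed_measure \<mu>" "A \<in> sets borel"
  shows "emeasure (pos_meas \<mu>) A = ennreal (pos_part \<mu> A)"
  unfolding pos_meas_def
proof (rule emeasure_measure_of_sigma)
  show "sigma_algebra UNIV (sets borel)"
    using sets.sigma_algebra_axioms[of borel] by simp
  show "positive (sets borel) (\<lambda>A. ennreal (pos_part \<mu> A))"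
    using signed_measure_empty[OF signed_measure_pos_part[OF assms(1)]] by (simp add: positive_def)
  show "countably_additive (sets borel) (\<lambda>A. ennreal (pos_part \<mu> A))"
  proof (rule countably_additiveI)
    fix F :: "nat \<Rightarrow> 'a set" assume F: "range F \<subseteq> sets borel" "disjoint_family F"
    have "(\<lambda>n. pos_part \<mu> (F n)) sums pos_part \<mu> (\<Union>n. F n)"
      by (rule signed_measure_sums[OF signed_measure_pos_part[OF assms(1)] F])
    then show "(\<Sum>i. ennreal (pos_part \<mu> (F i))) = ennreal (pos_part \<mu> (\<Union>i. F i))"
      using pos_part_nonneg[OF assms(1)]
      by (simp add: suminf_ennreal2 sums_summable sums_unique[symmetric])
  qed
qed (fact assms(2))

lemma emeasure_neg_meas:
  "signed_measure \<mu> \<Longrightarrow> A \<in> sets borel \<Longrightarrow> emeasure (neg_meas \<mu>) A = ennreal (neg_part \<mu> A)"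
  unfolding neg_meas_eq_pos_meas neg_part_def by (intro emeasure_pos_meas signed_measure_uminus)

lemma finite_measure_pos_meas: "signed_measure \<mu> \<Longrightarrow> finite_measure (pos_meas \<mu>)"
  using emeasure_pos_meas[of \<mu> UNIV] by (intro finite_measureI) simp

lemma finite_measure_neg_meas: "signed_measure \<mu> \<Longrightarrow> finite_measure (neg_meas \<mu>)"
  unfolding neg_meas_eq_pos_meas by (intro finite_measure_pos_meas signed_measure_uminus)

lemma measure_pos_meas:
  assumes "signed_measure \<mu>" "A \<in> sets borel"
  shows "measure (pos_meas \<mu>) A = pos_part \<mu> A"
  using emeasure_pos_meas[OF assms] pos_part_nonneg[OF assms(1), of A] by (simp add: measure_def)

lemma measure_neg_meas:
  "signed_measure \<mu> \<Longrightarrow> A \<in> sets borel \<Longrightarrow> measure (neg_meas \<mu>) A = neg_part \<mu> A"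
  unfolding neg_meas_eq_pos_meas neg_part_def by (intro measure_pos_meas signed_measure_uminus)

lemma tv_norm_eq_measure:
  "signed_measure \<mu> \<Longrightarrow> tv_norm \<mu> = measure (pos_meas \<mu>) UNIV + measure (neg_meas \<mu>) UNIV"
  by (simp add: tv_norm_def measure_pos_meas measure_neg_meas)

lemma tv_norm_nonneg: "signed_measure \<mu> \<Longrightarrow> 0 \<le> tv_norm \<mu>"
  unfolding tv_norm_def by (intro add_nonneg_nonneg pos_part_nonneg neg_part_nonneg)

lemma pos_part_le_tv_norm:
  "signed_measure \<mu> \<Longrightarrow> A \<in> sets borel \<Longrightarrow> pos_part \<mu> A \<le> tv_norm \<mu>"
  using pos_part_le_UNIV[of \<mu> A] neg_part_nonneg[of \<mu> UNIV] by (simp add: tv_norm_def)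

lemma abs_le_tv_norm:
  assumes "signed_measure \<mu>" "A \<in> sets borel"
  shows "\<bar>\<mu> A\<bar> \<le> tv_norm \<mu>"
  using signed_measure_eq_pos_part_minus_neg_part[OF assms] pos_part_le_UNIV[OF assms]
    neg_part_le_UNIV[OF assms] pos_part_nonneg[OF assms(1), of A] neg_part_nonneg[OF assms(1), of A]
  unfolding tv_norm_def by linarith

section \<open>Integration against signed measures\<close>

lemma integral_incseq_dominated:
  fixes U :: "nat \<Rightarrow> 'a \<Rightarrow> real"
  assumes u: "integrable M u" and U: "\<And>n. U n \<in> borel_measurable M" "\<And>n x. 0 \<le> U n x" "incseq U"
    and lim: "\<And>x. x \<in> space M \<Longrightarrow> (\<lambda>n. U n x) \<longlonglongrightarrow> u x"
  shows "integrable M (U n)" "(\<lambda>n. integral\<^sup>L M (U n)) \<longlonglongrightarrow> integral\<^sup>L M u"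
proof -
  have "U n x \<le> u x" if "x \<in> space M" for n x
  proof (rule incseq_le)
    show "incseq (\<lambda>n. U n x)" using U(3) by (auto simp: incseq_def le_fun_def)
  qed (rule lim[OF that])
  then have bound: "AE x in M. norm (U n x) \<le> norm (u x)" for n
    using U(2) by (intro AE_I2) (simp add: order_trans[OF _ abs_ge_self])
  show "integrable M (U n)"
    by (rule Bochner_Integration.integrable_bound[OF u U(1) bound])
  show "(\<lambda>n. integral\<^sup>L M (U n)) \<longlonglongrightarrow> integral\<^sup>L M u"
    using u U(1) bound lim by (intro integral_dominated_convergence[where w = "\<lambda>x. norm (u x)"]) auto
qed

lemma integrable_nonneg_summand:
  fixes u v :: "'a \<Rightarrow> real"
  assumes "integrable M (\<lambda>x. v x + u x)" "u \<in> borel_measurable M" "\<And>x. 0 \<le> u x" "\<And>x. 0 \<le> v x"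
  shows "integrable M u"
  by (rule Bochner_Integration.integrable_bound[OF assms(1,2)]) (use assms(3,4) in auto)

text \<open>The integrability hypothesis is part of the conclusion so that it is carried through the
  induction over nonnegative measurable functions.\<close>

lemma integral_combination_eq_0_nonneg:
  fixes Ms :: "'i \<Rightarrow> 'a measure" and c :: "'i \<Rightarrow> real"
  assumes sets: "\<And>i. i \<in> I \<Longrightarrow> sets (Ms i) = sets N"
    and zero: "\<And>A. A \<in> sets N \<Longrightarrow> (\<Sum>i\<in>I. c i * measure (Ms i) A) = 0"
    and u: "u \<in> borel_measurable N" "\<And>x. 0 \<le> u x"
  shows "(\<forall>i\<in>I. integrable (Ms i) u) \<longrightarrow> (\<Sum>i\<in>I. c i * integral\<^sup>L (Ms i) u) = 0"
proof -
  have meas: "f \<in> borel_measurable (Ms i)" if "i \<in> I" "f \<in> borel_measurable N" for i f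
    using that(2) by (simp add: measurable_cong_sets[OF sets[OF that(1)] refl])
  have space: "space (Ms i) = space N" if "i \<in> I" for i
    by (rule sets_eq_imp_space_eq[OF sets[OF that]])
  show ?thesis
    using u
  proof (induction rule: borel_measurable_induct_real)
    case (set A)
    then have "integral\<^sup>L (Ms i) (indicator A) = measure (Ms i) A" if "i \<in> I" for i
      using sets.sets_into_space[OF set] space[OF that] by (simp add: Int_absorb2)
    then show ?case using zero[OF set] by simp
  next
    case (mult u a)
    show ?case
    proof
      assume "\<forall>i\<in>I. integrable (Ms i) (\<lambda>x. a * u x)"
      then have "a = 0 \<or> (\<forall>i\<in>I. integrable (Ms i) u)" by auto
      then have "a * (\<Sum>i\<in>I. c i * integral\<^sup>L (Ms i) u) = 0" using mult.IH by auto
      then show "(\<Sum>i\<in>I. c i * integral\<^sup>L (Ms i) (\<lambda>x. a * u x)) = 0"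
        by (simp add: sum_distrib_left mult.left_commute)
    qed
  next
    case (add u v)
    show ?case
    proof
      assume uv: "\<forall>i\<in>I. integrable (Ms i) (\<lambda>x. v x + u x)"
      have "integrable (Ms i) u \<and> integrable (Ms i) v" if i: "i \<in> I" for i
      proof
        have "integrable (Ms i) (\<lambda>x. v x + u x)" "integrable (Ms i) (\<lambda>x. u x + v x)"
          using uv i by (simp_all add: add.commute)
        then show "integrable (Ms i) u" "integrable (Ms i) v"
          using integrable_nonneg_summand meas[OF i] add.hyps by blast+
      qed
      then show "(\<Sum>i\<in>I. c i * integral\<^sup>L (Ms i) (\<lambda>x. v x + u x)) = 0"
        using add.IH by (simp add: sum.distrib distrib_left)
    qed
  next
    case (seq U)
    show ?case
    proof
      assume int_u: "\<forall>i\<in>I. integrable (Ms i) u"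
      have U: "integrable (Ms i) (U n) \<and> (\<lambda>n. integral\<^sup>L (Ms i) (U n)) \<longlonglongrightarrow> integral\<^sup>L (Ms i) u"
        if i: "i \<in> I" for i n
      proof -
        have "integrable (Ms i) u" using int_u i by blast
        moreover have "(\<lambda>n. U n x) \<longlonglongrightarrow> u x" if "x \<in> space (Ms i)" for x
          using seq.hyps(4) that space[OF i] by simp
        ultimately show ?thesis
          using integral_incseq_dominated[of "Ms i" u U] meas[OF i seq.hyps(1)] seq.hyps(2,3) by blast
      qed
      have "(\<lambda>n. \<Sum>i\<in>I. c i * integral\<^sup>L (Ms i) (U n)) \<longlonglongrightarrow> (\<Sum>i\<in>I. c i * integral\<^sup>L (Ms i) u)"
      proof (intro tendsto_sum tendsto_mult tendsto_const)
        fix i assume "i \<in> I"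
        then show "(\<lambda>n. integral\<^sup>L (Ms i) (U n)) \<longlonglongrightarrow> integral\<^sup>L (Ms i) u" using U by blast
      qed
      moreover have "(\<Sum>i\<in>I. c i * integral\<^sup>L (Ms i) (U n)) = 0" for n
        using seq.IH U by blast
      ultimately show "(\<Sum>i\<in>I. c i * integral\<^sup>L (Ms i) u) = 0"
        by (simp add: LIMSEQ_const_iff)
    qed
  qed
qed

lemma integral_combination_eq_0:
  fixes Ms :: "'i \<Rightarrow> 'a measure" and c :: "'i \<Rightarrow> real"
  assumes sets: "\<And>i. i \<in> I \<Longrightarrow> sets (Ms i) = sets N"
    and zero: "\<And>A. A \<in> sets N \<Longrightarrow> (\<Sum>i\<in>I. c i * measure (Ms i) A) = 0"
    and f: "f \<in> borel_measurable N" "\<And>i. i \<in> I \<Longrightarrow> integrable (Ms i) f"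
  shows "(\<Sum>i\<in>I. c i * integral\<^sup>L (Ms i) f) = 0"
proof -
  define fp where "fp x = max (f x) 0" for x
  define fn where "fn x = max (- f x) 0" for x
  have meas: "fp \<in> borel_measurable N" "fn \<in> borel_measurable N"
    unfolding fp_def fn_def using f(1) by measurable
  have int: "integrable (Ms i) fp" "integrable (Ms i) fn" if "i \<in> I" for i
    unfolding fp_def fn_def using f(2)[OF that]
    by (intro integrable_max integrable_minus integrable_zero; assumption)+
  have "(\<Sum>i\<in>I. c i * integral\<^sup>L (Ms i) fp) = 0" "(\<Sum>i\<in>I. c i * integral\<^sup>L (Ms i) fn) = 0"
    using integral_combination_eq_0_nonneg[OF sets zero meas(1)]
      integral_combination_eq_0_nonneg[OF sets zero meas(2)] int
    by (simp_all add: fp_def fn_def)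
  moreover have "integral\<^sup>L (Ms i) f = integral\<^sup>L (Ms i) fp - integral\<^sup>L (Ms i) fn" if "i \<in> I" for i
  proof -
    have "f = (\<lambda>x. fp x - fn x)" by (auto simp: fp_def fn_def)
    then show ?thesis using int[OF that] by simp
  qed
  ultimately show ?thesis
    by (simp add: right_diff_distrib sum_subtractf)
qed

lemma measurable_pos_meas [simp]:
  "measurable (pos_meas \<mu>) M = measurable borel M" "measurable (neg_meas \<mu>) M = measurable borel M"
  by (rule measurable_cong_sets; simp)+

lemma integrable_bounded_pos_meas:
  fixes f :: "'a::topological_space \<Rightarrow> real"
  assumes "signed_measure \<mu>" "f \<in> borel_measurable borel" "\<And>x. \<bar>f x\<bar> \<le> K"
  shows "integrable (pos_meas \<mu>) f" "integrable (neg_meas \<mu>) f"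
  using assms(2,3)
  by (auto intro!: finite_measure.integrable_const_bound[where B = K]
      finite_measure_pos_meas[OF assms(1)] finite_measure_neg_meas[OF assms(1)])

lemma sintegral_linear:
  assumes "signed_measure \<mu>" "signed_measure \<nu>"
    and f: "f \<in> borel_measurable borel" "\<And>x. \<bar>f x\<bar> \<le> K"
  shows "sintegral (\<lambda>B. a * \<mu> B + b * \<nu> B) f = a * sintegral \<mu> f + b * sintegral \<nu> f"
proof -
  define \<rho> where "\<rho> = (\<lambda>B. a * \<mu> B + b * \<nu> B)"
  have sm: "signed_measure \<rho>" "signed_measure \<mu>" "signed_measure \<nu>"
    unfolding \<rho>_def using assms(1,2) by (auto intro: signed_measure_linear)
  define Ms where
    "Ms = [pos_meas \<rho>, neg_meas \<rho>, pos_meas \<mu>, neg_meas \<mu>, pos_meas \<nu>, neg_meas \<nu>]"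
  define c :: "real list" where "c = [1, -1, -a, a, -b, b]"
  have six: "(\<Sum>i<6. g i) = g 0 + g 1 + g 2 + g 3 + g 4 + g (5::nat)" for g :: "nat \<Rightarrow> real"
    by (simp add: eval_nat_numeral)
  have "(\<Sum>i<6. c ! i * integral\<^sup>L (Ms ! i) f) = 0"
  proof (rule integral_combination_eq_0[OF _ _ f(1)])
    fix i :: nat assume "i \<in> {..<6}"
    then have "i = 0 \<or> i = 1 \<or> i = 2 \<or> i = 3 \<or> i = 4 \<or> i = 5" by auto
    then show "sets (Ms ! i) = sets borel" "integrable (Ms ! i) f"
      using integrable_bounded_pos_meas[OF sm(1) f] integrable_bounded_pos_meas[OF sm(2) f]
        integrable_bounded_pos_meas[OF sm(3) f]
      by (auto simp: Ms_def)
  next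
    fix A :: "'a set" assume A: "A \<in> sets borel"
    have "(\<Sum>i<6. c ! i * measure (Ms ! i) A) = (pos_part \<rho> A - neg_part \<rho> A)
        - a * (pos_part \<mu> A - neg_part \<mu> A) - b * (pos_part \<nu> A - neg_part \<nu> A)"
      unfolding six using sm A by (simp add: Ms_def c_def measure_pos_meas measure_neg_meas algebra_simps)
    also have "\<dots> = \<rho> A - a * \<mu> A - b * \<nu> A"
      using signed_measure_eq_pos_part_minus_neg_part[OF _ A] sm by simp
    finally show "(\<Sum>i<6. c ! i * measure (Ms ! i) A) = 0"
      by (simp add: \<rho>_def)
  qed
  then show ?thesis
    unfolding six \<rho>_def[symmetric] by (simp add: Ms_def c_def sintegral_def algebra_simps)
qed

lemma sintegral_nonneg_measure:
  assumes "signed_measure \<mu>" "\<forall>X\<in>sets borel. 0 \<le> \<mu> X"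
  shows "sintegral \<mu> f = integral\<^sup>L (pos_meas \<mu>) f"
proof -
  have "emeasure (neg_meas \<mu>) UNIV = 0"
    using emeasure_neg_meas[OF assms(1)] neg_part_eq_0[OF assms] by simp
  then have "AE x in neg_meas \<mu>. f x = 0"
    by (intro AE_I'[of UNIV]) (auto simp: null_sets_def)
  then show ?thesis by (simp add: sintegral_def integral_eq_zero_AE)
qed

lemma pos_meas_restrict:
  assumes "signed_measure \<mu>" "\<forall>X\<in>sets borel. 0 \<le> \<mu> X" "E \<in> sets borel"
  shows "pos_meas (\<lambda>B. \<mu> (B \<inter> E)) = density (pos_meas \<mu>) (\<lambda>x. ennreal (indicator E x))"
proof (rule measure_eqI)
  fix B assume "B \<in> sets (pos_meas (\<lambda>B. \<mu> (B \<inter> E)))"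
  then have B: "B \<in> sets borel" by simp
  have sm: "signed_measure (\<lambda>B. \<mu> (B \<inter> E))" by (rule signed_measure_restrict[OF assms(1,3)])
  have "emeasure (density (pos_meas \<mu>) (\<lambda>x. ennreal (indicator E x))) B =
      (\<integral>\<^sup>+ x. ennreal (indicator E x) * indicator B x \<partial>pos_meas \<mu>)"
    using B assms(3) by (intro emeasure_density) auto
  also have "\<dots> = (\<integral>\<^sup>+ x. indicator (B \<inter> E) x \<partial>pos_meas \<mu>)"
    by (intro nn_integral_cong) (simp split: split_indicator)
  also have "\<dots> = emeasure (pos_meas \<mu>) (B \<inter> E)"
    using B assms(3) by (intro nn_integral_indicator) simp
  also have "\<dots> = emeasure (pos_meas (\<lambda>B. \<mu> (B \<inter> E))) B"
    using B assms(3) emeasure_pos_meas[OF assms(1), of "B \<inter> E"] emeasure_pos_meas[OF sm B]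
      pos_part_eq_self[OF assms(1,2), of "B \<inter> E"] pos_part_eq_self[OF sm _ B] assms(2)
    by simp
  finally show "emeasure (pos_meas (\<lambda>B. \<mu> (B \<inter> E))) B =
      emeasure (density (pos_meas \<mu>) (\<lambda>x. ennreal (indicator E x))) B"
    by simp
qed simp

lemma integral_pos_meas_restrict:
  fixes f :: "'a::topological_space \<Rightarrow> real"
  assumes "signed_measure \<mu>" "\<forall>X\<in>sets borel. 0 \<le> \<mu> X" "E \<in> sets borel"
    and "f \<in> borel_measurable borel"
  shows "integral\<^sup>L (pos_meas (\<lambda>B. \<mu> (B \<inter> E))) f = integral\<^sup>L (pos_meas \<mu>) (\<lambda>x. indicator E x * f x)"
proof -
  have "integral\<^sup>L (density (pos_meas \<mu>) (\<lambda>x. ennreal (indicator E x))) f =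
      integral\<^sup>L (pos_meas \<mu>) (\<lambda>x. indicator E x *\<^sub>R f x)"
    by (rule integral_density) (use assms(3,4) in auto)
  then show ?thesis unfolding pos_meas_restrict[OF assms(1-3)] by simp
qed

section \<open>Approximation by a countable algebra of sets\<close>

definition approximable_by :: "'a measure \<Rightarrow> 'a set set \<Rightarrow> 'a set \<Rightarrow> bool" where
  "approximable_by M \<A> E \<longleftrightarrow> (\<forall>\<epsilon>>0. \<exists>C\<in>\<A>. measure M (sym_diff E C) < \<epsilon>)"

lemma approximable_by_Compl:
  assumes "approximable_by M \<A> E" "\<And>C. C \<in> \<A> \<Longrightarrow> UNIV - C \<in> \<A>"
  shows "approximable_by M \<A> (UNIV - E)"
  unfolding approximable_by_def
proof (intro allI impI)
  fix \<epsilon> :: real assume "0 < \<epsilon>"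
  then obtain C where C: "C \<in> \<A>" "measure M (sym_diff E C) < \<epsilon>"
    using assms(1) unfolding approximable_by_def by blast
  have "sym_diff (UNIV - E) (UNIV - C) = sym_diff E C" by blast
  then have "measure M (sym_diff (UNIV - E) (UNIV - C)) < \<epsilon>"
    using C(2) by (simp only:)
  then show "\<exists>C\<in>\<A>. measure M (sym_diff (UNIV - E) C) < \<epsilon>"
    using assms(2)[OF C(1)] by blast
qed

lemma approximable_by_UN:
  fixes F :: "nat \<Rightarrow> 'a set"
  assumes M: "finite_measure M" and \<A>: "algebra UNIV \<A>" "\<A> \<subseteq> sets M"
    and F: "\<And>i. F i \<in> sets M" "\<And>i. approximable_by M \<A> (F i)"
  shows "approximable_by M \<A> (\<Union>i. F i)"
  unfolding approximable_by_def
proof (intro allI impI)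
  interpret finite_measure M by fact
  interpret algebra UNIV \<A> by fact
  fix \<epsilon> :: real assume "0 < \<epsilon>"
  define P where "P n = (\<Union>i<n. F i)" for n
  have "incseq P" unfolding P_def incseq_def by (auto intro: less_le_trans)
  then have "(\<lambda>n. measure M (P n)) \<longlonglongrightarrow> measure M (\<Union>n. P n)"
    using F(1) by (intro finite_Lim_measure_incseq) (auto simp: P_def[abs_def])
  moreover have "(\<Union>n. P n) = (\<Union>i. F i)" by (auto simp: P_def)
  ultimately have "(\<lambda>n. measure M (P n)) \<longlonglongrightarrow> measure M (\<Union>i. F i)" by simp
  then obtain N where "\<bar>measure M (P N) - measure M (\<Union>i. F i)\<bar> < \<epsilon> / 2"
    using LIMSEQ_D[of _ _ "\<epsilon> / 2"] \<open>0 < \<epsilon>\<close> by fastforce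
  moreover have "measure M ((\<Union>i. F i) - P N) = measure M (\<Union>i. F i) - measure M (P N)"
    using F(1) by (intro finite_measure_Diff) (auto simp: P_def)
  ultimately have tail: "measure M ((\<Union>i. F i) - P N) < \<epsilon> / 2"
    by linarith
  define \<delta> where "\<delta> = \<epsilon> / (2 * (real N + 1))"
  have "0 < \<delta>" using \<open>0 < \<epsilon>\<close> by (simp add: \<delta>_def)
  then have "\<forall>i. \<exists>C\<in>\<A>. measure M (sym_diff (F i) C) < \<delta>"
    using F(2) unfolding approximable_by_def by blast
  then obtain C where C: "\<And>i. C i \<in> \<A>" "\<And>i. measure M (sym_diff (F i) (C i)) < \<delta>"
    by metis
  define D where "D i = sym_diff (F i) (C i)" for i
  have D_M: "D i \<in> sets M" for i
    using F(1)[of i] C(1)[of i] \<A>(2) unfolding D_def by blast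
  have UF_M: "(\<Union>i. F i) \<in> sets M" and P_M: "P N \<in> sets M" using F(1) by (auto simp: P_def)
  have "sym_diff (\<Union>i. F i) (\<Union>i<N. C i) \<subseteq> ((\<Union>i. F i) - P N) \<union> (\<Union>i<N. D i)"
    by (auto simp: P_def D_def)
  then have "measure M (sym_diff (\<Union>i. F i) (\<Union>i<N. C i))
      \<le> measure M (((\<Union>i. F i) - P N) \<union> (\<Union>i<N. D i))"
    using UF_M P_M D_M by (intro finite_measure_mono) auto
  also have "\<dots> \<le> measure M ((\<Union>i. F i) - P N) + (\<Sum>i<N. measure M (D i))"
    using UF_M P_M D_M measure_UNION_le[where M = M and I = "{..<N}" and F = D]
      measure_Un_le[where M = M and A = "(\<Union>i. F i) - P N" and B = "\<Union>i<N. D i"]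
    by auto
  also have "(\<Sum>i<N. measure M (D i)) \<le> real N * \<delta>"
    using sum_mono[of "{..<N}" "\<lambda>i. measure M (D i)" "\<lambda>_. \<delta>"] C(2) by (simp add: D_def less_imp_le)
  also have "real N * \<delta> < \<epsilon> / 2"
    using \<open>0 < \<epsilon>\<close> by (simp add: \<delta>_def field_simps)
  finally show "\<exists>C'\<in>\<A>. measure M (sym_diff (\<Union>i. F i) C') < \<epsilon>"
    using tail C(1) by (intro bexI[of _ "\<Union>i<N. C i"]) auto
qed

lemma sigma_sets_approximable_by:
  assumes "finite_measure M" "algebra UNIV \<A>" "\<A> \<subseteq> sets M" "E \<in> sigma_sets UNIV \<A>"
  shows "approximable_by M \<A> E"
  using assms(4)
proof (induction rule: sigma_sets.induct)
  case (Basic a)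
  then show ?case unfolding approximable_by_def by (intro allI impI bexI[of _ a]) simp_all
next
  case Empty
  have "{} \<in> \<A>" using algebra.axioms(1)[OF assms(2)] by (simp add: ring_of_sets_iff)
  then show ?case unfolding approximable_by_def by (intro allI impI bexI[of _ "{}"]) simp_all
next
  case (Compl a)
  show ?case by (rule approximable_by_Compl[OF Compl.IH algebra.compl_sets[OF assms(2)]])
next
  case (Union F)
  have "space M = UNIV"
    using sets.sets_into_space[OF subsetD[OF assms(3) algebra.top[OF assms(2)]]] by auto
  then have "sigma_sets UNIV \<A> \<subseteq> sets M"
    using sets.sigma_sets_subset[OF assms(3)] by simp
  then have "F i \<in> sets M" for i using Union.hyps by blast
  then show ?case by (rule approximable_by_UN[OF assms(1-3)]) (rule Union.IH)
qed

datatype set_expr = SGen nat | SEmpty | SCompl set_expr | SUnion set_expr set_expr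

instance set_expr :: countable
  by countable_datatype

primrec eval_set_expr :: "(nat \<Rightarrow> 'a set) \<Rightarrow> set_expr \<Rightarrow> 'a set" where
  "eval_set_expr G (SGen n) = G n"
| "eval_set_expr G SEmpty = {}"
| "eval_set_expr G (SCompl e) = - eval_set_expr G e"
| "eval_set_expr G (SUnion e e') = eval_set_expr G e \<union> eval_set_expr G e'"

lemma algebra_range_eval_set_expr: "algebra UNIV (range (eval_set_expr G))"
  unfolding algebra_iff_Un
proof (intro conjI ballI)
  show "{} \<in> range (eval_set_expr G)" using rangeI[of "eval_set_expr G" SEmpty] by simp
next
  fix a assume "a \<in> range (eval_set_expr G)"
  then obtain e where "a = eval_set_expr G e" by blast
  then show "UNIV - a \<in> range (eval_set_expr G)"
    using rangeI[of "eval_set_expr G" "SCompl e"] by (simp add: Compl_eq_Diff_UNIV)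
next
  fix a b assume "a \<in> range (eval_set_expr G)" "b \<in> range (eval_set_expr G)"
  then obtain e e' where "a = eval_set_expr G e" "b = eval_set_expr G e'" by blast
  then show "a \<union> b \<in> range (eval_set_expr G)"
    using rangeI[of "eval_set_expr G" "SUnion e e'"] by simp
qed simp

lemma eval_set_expr_borel: "(\<And>n. G n \<in> sets borel) \<Longrightarrow> eval_set_expr G e \<in> sets borel"
  by (induction e) auto

definition borel_approximating :: "(nat \<Rightarrow> 'a::topological_space set) \<Rightarrow> bool" where
  "borel_approximating C \<longleftrightarrow> range C \<subseteq> sets borel \<and>
     (\<forall>M. finite_measure M \<longrightarrow> sets M = sets borel \<longrightarrow> (\<forall>E\<in>sets borel. approximable_by M (range C) E))"

text \<open>Enumerate the Boolean combinations of a countable base; \<open>{}\<close> is added to the base only to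
  make the enumeration \<open>from_nat_into\<close> total.\<close>

lemma ex_borel_approximating: "\<exists>C :: nat \<Rightarrow> 'a::second_countable_topology set. borel_approximating C"
proof -
  obtain B :: "'a set set" where B: "countable B" "topological_basis B"
    using ex_countable_basis by blast
  define G where "G = from_nat_into (insert {} B)"
  have range_G: "range G = insert {} B"
    unfolding G_def using B(1) by (intro range_from_nat_into) auto
  have G: "G n \<in> sets borel" for n
  proof -
    have "G n \<in> insert {} B" using range_G by blast
    then show ?thesis using topological_basis_open[OF B(2)] by auto
  qed
  have "sets (borel :: 'a measure) = sigma_sets UNIV B"
    unfolding borel_eq_countable_basis[OF B] by (rule sets_measure_of) simp
  also have "\<dots> \<subseteq> sigma_sets UNIV (range (eval_set_expr G))"
  proof (rule sigma_sets_subseteq)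
    show "B \<subseteq> range (eval_set_expr G)"
    proof
      fix X assume "X \<in> B"
      then obtain n where "X = G n" using range_G by (metis insertCI rangeE)
      then show "X \<in> range (eval_set_expr G)" using rangeI[of "eval_set_expr G" "SGen n"] by simp
    qed
  qed
  finally have borel_G: "sets borel \<subseteq> sigma_sets UNIV (range (eval_set_expr G))" .
  define C where "C n = eval_set_expr G (from_nat n)" for n
  have range_C: "range C = range (eval_set_expr G)"
    unfolding C_def by (metis surj_from_nat image_image)
  have "borel_approximating C"
    unfolding borel_approximating_def range_C
  proof (intro conjI allI impI ballI)
    show "range (eval_set_expr G) \<subseteq> sets borel" using eval_set_expr_borel[of G] G by blast
    fix M :: "'a measure" and E :: "'a set"
    assume "finite_measure M" "sets M = sets borel" "E \<in> sets borel"
    then show "approximable_by M (range (eval_set_expr G)) E"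
      using eval_set_expr_borel[of G] G borel_G
      by (intro sigma_sets_approximable_by algebra_range_eval_set_expr) auto
  qed
  then show ?thesis by blast
qed

lemma signed_measure_dominated:
  assumes "signed_measure \<mu>"
  obtains V where "finite_measure V" "sets V = sets borel"
    "\<And>X. X \<in> sets borel \<Longrightarrow> \<bar>\<mu> X\<bar> \<le> measure V X"
proof -
  have sm: "signed_measure (\<lambda>X. pos_part \<mu> X + neg_part \<mu> X)"
    using signed_measure_linear[OF signed_measure_pos_part signed_measure_neg_part, OF assms assms,
      of 1 1] by simp
  have nonneg: "\<forall>X\<in>sets borel. 0 \<le> pos_part \<mu> X + neg_part \<mu> X"
    using pos_part_nonneg[OF assms] neg_part_nonneg[OF assms] by (simp add: add_nonneg_nonneg)
  have le: "\<bar>\<mu> X\<bar> \<le> measure (pos_meas (\<lambda>X. pos_part \<mu> X + neg_part \<mu> X)) X"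
    if "X \<in> sets borel" for X
    using measure_pos_meas[OF sm that] pos_part_eq_self[OF sm nonneg that]
      signed_measure_eq_pos_part_minus_neg_part[OF assms that]
      pos_part_nonneg[OF assms, of X] neg_part_nonneg[OF assms, of X]
    by simp
  show ?thesis by (rule that[OF finite_measure_pos_meas[OF sm] sets_pos_meas le])
qed

lemma pos_part_approx:
  assumes "signed_measure \<mu>" "A \<in> sets borel" "0 < \<epsilon>" and C: "borel_approximating C"
  shows "\<exists>n. pos_part \<mu> A - \<epsilon> < \<mu> (C n \<inter> A)"
proof -
  obtain Y where Y: "hahn_set \<mu> Y" using ex_hahn_set[OF assms(1)] .
  define E where "E = A \<inter> Y"
  have E: "E \<in> sets borel" and pos_E: "pos_part \<mu> A = \<mu> E"
    using Y assms(2) pos_part_hahn[OF assms(1) Y assms(2)] by (auto simp: E_def hahn_set_def)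
  obtain V where V: "finite_measure V" "sets V = sets borel"
    and abs_le_V: "\<And>X. X \<in> sets borel \<Longrightarrow> \<bar>\<mu> X\<bar> \<le> measure V X"
    using signed_measure_dominated[OF assms(1)] by blast
  have C_borel: "C n \<in> sets borel" for n
    using C by (auto simp: borel_approximating_def)
  obtain n where n: "measure V (sym_diff E (C n)) < \<epsilon>"
    using C V E assms(3) unfolding borel_approximating_def approximable_by_def by blast
  define X1 where "X1 = C n \<inter> A - E"
  define X2 where "X2 = E - C n"
  have X: "X1 \<in> sets borel" "X2 \<in> sets borel"
    using C_borel[of n] assms(2) E by (auto simp: X1_def X2_def)
  have "\<mu> (C n \<inter> A) = \<mu> (E \<inter> C n) + \<mu> X1"
  proof -
    have "C n \<inter> A \<inter> E = E \<inter> C n" by (auto simp: E_def)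
    then show ?thesis
      using signed_measure_Int_Diff[OF assms(1) _ E, of "C n \<inter> A"] C_borel[of n] assms(2)
      by (simp add: X1_def)
  qed
  moreover have "\<mu> E = \<mu> (E \<inter> C n) + \<mu> X2"
    unfolding X2_def by (rule signed_measure_Int_Diff[OF assms(1) E C_borel])
  moreover have "measure V X1 + measure V X2 < \<epsilon>"
  proof -
    interpret finite_measure V by (fact V(1))
    have "measure V X1 + measure V X2 = measure V (X1 \<union> X2)"
      using X V(2) by (intro finite_measure_Union[symmetric]) (auto simp: X1_def X2_def)
    also have "\<dots> \<le> measure V (sym_diff E (C n))"
      using X V(2) E C_borel[of n] by (intro finite_measure_mono) (auto simp: X1_def X2_def)
    finally show ?thesis using n by linarith
  qed
  ultimately have "pos_part \<mu> A - \<epsilon> < \<mu> (C n \<inter> A)"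
    using pos_E abs_le_V[OF X(1)] abs_le_V[OF X(2)] by linarith
  then show ?thesis ..
qed

primrec max_upto :: "(nat \<Rightarrow> real) \<Rightarrow> nat \<Rightarrow> real" where
  "max_upto a 0 = 0"
| "max_upto a (Suc n) = max (max_upto a n) (a n)"

lemma incseq_max_upto: "incseq (max_upto a)"
  by (rule incseq_SucI) simp

lemma max_upto_le: "0 \<le> s \<Longrightarrow> (\<And>n. a n \<le> s) \<Longrightarrow> max_upto a n \<le> s"
  by (induction n) simp_all

lemma max_upto_nonneg: "0 \<le> max_upto a n"
  using incseq_max_upto[of a] by (metis incseq_def le0 max_upto.simps(1))

lemma max_upto_LIMSEQ:
  assumes "0 \<le> s" "\<And>n. a n \<le> s" "\<And>\<epsilon>. 0 < \<epsilon> \<Longrightarrow> \<exists>n. s - \<epsilon> < a n"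
  shows "max_upto a \<longlonglongrightarrow> s"
proof (rule LIMSEQ_I)
  fix r :: real assume "0 < r"
  then obtain n0 where n0: "s - r < a n0" using assms(3) by blast
  have "norm (max_upto a n - s) < r" if "Suc n0 \<le> n" for n
  proof -
    have "a n0 \<le> max_upto a (Suc n0)" by simp
    also have "\<dots> \<le> max_upto a n"
      using monoD[OF incseq_max_upto that] .
    finally have "a n0 \<le> max_upto a n" .
    then show ?thesis using n0 max_upto_le[of s a n] assms(1,2) by simp
  qed
  then show "\<exists>no. \<forall>n\<ge>no. norm (max_upto a n - s) < r" by blast
qed

lemma borel_measurable_max_upto:
  "(\<And>n. (\<lambda>x. a n x) \<in> borel_measurable M) \<Longrightarrow> (\<lambda>x. max_upto (\<lambda>n. a n x) m) \<in> borel_measurable M"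
  by (induction m) simp_all

section \<open>Kernel operators\<close>

definition kernel_op :: "('a::topological_space \<Rightarrow> 'a set \<Rightarrow> real) \<Rightarrow> 'a meas_op" where
  "kernel_op k \<mu> A = sintegral \<mu> (\<lambda>x. k x A)"

lemma bounded_transition_kernelE:
  assumes "bounded_transition_kernel k"
  obtains C where "\<And>x. signed_measure (k x)"
    "\<And>A. A \<in> sets borel \<Longrightarrow> (\<lambda>x. k x A) \<in> borel_measurable borel"
    "\<And>x A. A \<in> sets borel \<Longrightarrow> \<bar>k x A\<bar> \<le> C" "0 \<le> C"
proof -
  obtain C where C: "\<And>x. tv_norm (k x) \<le> C"
    using assms by (auto simp: bounded_transition_kernel_def)
  have sm: "\<And>x. signed_measure (k x)"
    and "\<And>A. A \<in> sets borel \<Longrightarrow> (\<lambda>x. k x A) \<in> borel_measurable borel"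
    using assms by (auto simp: bounded_transition_kernel_def transition_kernel_def)
  moreover have "\<bar>k x A\<bar> \<le> C" if "A \<in> sets borel" for x A
    using abs_le_tv_norm[OF sm[of x] that] C[of x] by linarith
  moreover have "0 \<le> C" using tv_norm_nonneg[OF sm] C order_trans by blast
  ultimately show ?thesis by (rule that)
qed

lemma kernel_integral_sums:
  assumes k: "bounded_transition_kernel k" and M: "finite_measure M" "sets M = sets borel"
    and F: "range F \<subseteq> sets borel" "disjoint_family F"
  shows "(\<lambda>n. integral\<^sup>L M (\<lambda>x. k x (F n))) sums integral\<^sup>L M (\<lambda>x. k x (\<Union>n. F n))"
proof -
  obtain C where sm: "\<And>x. signed_measure (k x)"
    and meas_borel: "\<And>A. A \<in> sets borel \<Longrightarrow> (\<lambda>x. k x A) \<in> borel_measurable borel"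
    and bound: "\<And>x A. A \<in> sets borel \<Longrightarrow> \<bar>k x A\<bar> \<le> C" and "0 \<le> C"
    by (rule bounded_transition_kernelE[OF k]) blast
  have meas: "(\<lambda>x. k x A) \<in> borel_measurable M" if "A \<in> sets borel" for A
    using meas_borel[OF that] by (simp add: measurable_cong_sets[OF M(2) refl])
  have F_borel: "F n \<in> sets borel" "(\<Union>n. F n) \<in> sets borel" for n
    using F(1) by auto
  have int: "integrable M (\<lambda>x. k x A)" if "A \<in> sets borel" for A
    using bound[OF that] meas[OF that]
    by (intro finite_measure.integrable_const_bound[OF M(1), where B = C]) auto
  have partial: "(\<Sum>i<n. k x (F i)) = k x (\<Union>i<n. F i)" for n x
    using signed_measure_finite_UN[OF sm F] by simp
  have "(\<lambda>n. integral\<^sup>L M (\<lambda>x. \<Sum>i<n. k x (F i))) \<longlonglongrightarrow> integral\<^sup>L M (\<lambda>x. k x (\<Union>n. F n))"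
  proof (rule integral_dominated_convergence[where w = "\<lambda>_. C"])
    show "(\<lambda>x. \<Sum>i<n. k x (F i)) \<in> borel_measurable M" for n
      using meas F_borel by (intro borel_measurable_sum) auto
    show "AE x in M. (\<lambda>n. \<Sum>i<n. k x (F i)) \<longlonglongrightarrow> k x (\<Union>n. F n)"
      using signed_measure_sums[OF sm F] by (simp add: sums_def)
    show "AE x in M. norm (\<Sum>i<n. k x (F i)) \<le> C" for n
      unfolding partial using F_borel by (intro AE_I2) (simp add: bound sets.finite_UN)
  qed (use M(1) meas F_borel in \<open>simp_all add: finite_measure.integrable_const\<close>)
  moreover have "integral\<^sup>L M (\<lambda>x. \<Sum>i<n. k x (F i)) = (\<Sum>i<n. integral\<^sup>L M (\<lambda>x. k x (F i)))" for n
    using int F_borel by (intro Bochner_Integration.integral_sum) auto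
  ultimately show ?thesis by (simp add: sums_def)
qed

lemma signed_measure_kernel_op:
  assumes "bounded_transition_kernel k" "signed_measure \<mu>"
  shows "signed_measure (kernel_op k \<mu>)"
  unfolding signed_measure_def kernel_op_def
proof (intro conjI allI impI)
  have "signed_measure (k x)" for x
    using assms(1) by (simp add: bounded_transition_kernel_def transition_kernel_def)
  then show "sintegral \<mu> (\<lambda>x. k x {}) = 0" by (simp add: signed_measure_empty sintegral_def)
  fix F :: "nat \<Rightarrow> 'a set" assume "range F \<subseteq> sets borel" "disjoint_family F"
  then show "(\<lambda>n. sintegral \<mu> (\<lambda>x. k x (F n))) sums sintegral \<mu> (\<lambda>x. k x (\<Union>n. F n))"
    unfolding sintegral_def using assms
    by (intro sums_diff kernel_integral_sums finite_measure_pos_meas finite_measure_neg_meas) simp_all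
qed

lemma (in finite_measure) abs_integral_le_bound:
  fixes f :: "'a \<Rightarrow> real"
  assumes "\<And>x. x \<in> space M \<Longrightarrow> \<bar>f x\<bar> \<le> C"
  shows "\<bar>integral\<^sup>L M f\<bar> \<le> C * measure M (space M)"
proof -
  have "integral\<^sup>L M f \<le> integral\<^sup>L M (\<lambda>_. C)" "integral\<^sup>L M (\<lambda>x. - f x) \<le> integral\<^sup>L M (\<lambda>_. C)"
    using assms by (intro integral_mono'; force)+
  then show ?thesis by (simp add: abs_le_iff mult.commute)
qed

lemma abs_kernel_op_le:
  assumes "signed_measure \<mu>" "\<And>x. \<bar>k x A\<bar> \<le> C"
  shows "\<bar>kernel_op k \<mu> A\<bar> \<le> C * tv_norm \<mu>"
proof -
  have "\<bar>integral\<^sup>L (pos_meas \<mu>) (\<lambda>x. k x A)\<bar> \<le> C * measure (pos_meas \<mu>) UNIV"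
    "\<bar>integral\<^sup>L (neg_meas \<mu>) (\<lambda>x. k x A)\<bar> \<le> C * measure (neg_meas \<mu>) UNIV"
    using finite_measure.abs_integral_le_bound[OF finite_measure_pos_meas[OF assms(1)]]
      finite_measure.abs_integral_le_bound[OF finite_measure_neg_meas[OF assms(1)]] assms(2)
    by simp_all
  then show ?thesis
    unfolding kernel_op_def sintegral_def tv_norm_eq_measure[OF assms(1)] by (simp add: algebra_simps)
qed

lemma tv_norm_le_of_abs_le:
  assumes "\<And>B. B \<in> sets borel \<Longrightarrow> \<bar>\<nu> B\<bar> \<le> K"
  shows "tv_norm \<nu> \<le> 2 * K"
proof -
  have "pos_part \<nu> UNIV \<le> K" "neg_part \<nu> UNIV \<le> K"
    unfolding neg_part_def pos_part_def using assms
    by (auto intro!: cSUP_least simp: abs_le_iff)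
  then show ?thesis by (simp add: tv_norm_def)
qed

lemma bounded_meas_op_kernel_op:
  assumes k: "bounded_transition_kernel k"
  shows "bounded_meas_op (kernel_op k)"
proof -
  obtain C where "\<And>x. signed_measure (k x)"
    and meas: "\<And>A. A \<in> sets borel \<Longrightarrow> (\<lambda>x. k x A) \<in> borel_measurable borel"
    and bound: "\<And>x A. A \<in> sets borel \<Longrightarrow> \<bar>k x A\<bar> \<le> C" and "0 \<le> C"
    by (rule bounded_transition_kernelE[OF k]) blast
  have "kernel_op k (\<lambda>B. a * \<mu> B + b * \<nu> B) A = a * kernel_op k \<mu> A + b * kernel_op k \<nu> A"
    if "signed_measure \<mu>" "signed_measure \<nu>" "A \<in> sets borel" for \<mu> \<nu> a b A
    unfolding kernel_op_def using that meas bound by (intro sintegral_linear) auto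
  moreover have "tv_norm (kernel_op k \<mu>) \<le> (2 * C) * tv_norm \<mu>" if "signed_measure \<mu>" for \<mu>
  proof -
    have "\<bar>kernel_op k \<mu> B\<bar> \<le> C * tv_norm \<mu>" if "B \<in> sets borel" for B
      using abs_kernel_op_le[of \<mu> k B C] \<open>signed_measure \<mu>\<close> bound[OF that] by blast
    then show ?thesis
      using tv_norm_le_of_abs_le[of "kernel_op k \<mu>" "C * tv_norm \<mu>"] by (simp add: mult.assoc)
  qed
  ultimately show ?thesis
    unfolding bounded_meas_op_def using signed_measure_kernel_op[OF k] by blast
qed

lemma kernel_op_nonneg_measure:
  "signed_measure \<mu> \<Longrightarrow> \<forall>X\<in>sets borel. 0 \<le> \<mu> X \<Longrightarrow>
    kernel_op k \<mu> A = integral\<^sup>L (pos_meas \<mu>) (\<lambda>x. k x A)"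
  unfolding kernel_op_def by (rule sintegral_nonneg_measure)

lemma op_le_kernel_op:
  assumes "bounded_transition_kernel k" "bounded_transition_kernel k'"
    and "\<And>x A. A \<in> sets borel \<Longrightarrow> k x A \<le> k' x A"
  shows "op_le (kernel_op k) (kernel_op k')"
  unfolding op_le_def
proof (intro allI impI ballI)
  fix \<mu> :: "'a set \<Rightarrow> real" and A :: "'a set" assume \<mu>: "signed_measure \<mu>" "\<forall>X\<in>sets borel. 0 \<le> \<mu> X"
    and A: "A \<in> sets borel"
  have "integrable (pos_meas \<mu>) (\<lambda>x. h x A)" if h: "bounded_transition_kernel h" for h
  proof -
    obtain C where "\<And>x. signed_measure (h x)"
      and meas: "\<And>A. A \<in> sets borel \<Longrightarrow> (\<lambda>x. h x A) \<in> borel_measurable borel"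
      and bound: "\<And>x A. A \<in> sets borel \<Longrightarrow> \<bar>h x A\<bar> \<le> C" and "0 \<le> C"
      by (rule bounded_transition_kernelE[OF h]) blast
    then show ?thesis using integrable_bounded_pos_meas[OF \<mu>(1) meas[OF A] bound[OF A]] by simp
  qed
  then have "integral\<^sup>L (pos_meas \<mu>) (\<lambda>x. k x A) \<le> integral\<^sup>L (pos_meas \<mu>) (\<lambda>x. k' x A)"
    using assms A by (intro integral_mono) auto
  then show "kernel_op k \<mu> A \<le> kernel_op k' \<mu> A"
    by (simp add: kernel_op_nonneg_measure[OF \<mu>])
qed

lemma op_le_zero_kernel_op:
  assumes "\<And>x A. A \<in> sets borel \<Longrightarrow> 0 \<le> k x A"
  shows "op_le zero_op (kernel_op k)"
  unfolding op_le_def zero_op_def using assms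
  by (auto simp: kernel_op_nonneg_measure intro!: integral_nonneg_AE)

lemma pos_part_max_upto_LIMSEQ:
  assumes "signed_measure \<mu>" "A \<in> sets borel"
    and C: "borel_approximating C"
  shows "max_upto (\<lambda>n. \<mu> (C n \<inter> A)) \<longlonglongrightarrow> pos_part \<mu> A"
proof (rule max_upto_LIMSEQ)
  show "0 \<le> pos_part \<mu> A" by (rule pos_part_nonneg[OF assms(1)])
  show "\<mu> (C n \<inter> A) \<le> pos_part \<mu> A" for n
    using C assms(2) by (intro le_pos_part[OF assms(1)]) (auto simp: borel_approximating_def)
  show "\<exists>n. pos_part \<mu> A - \<epsilon> < \<mu> (C n \<inter> A)" if "0 < \<epsilon>" for \<epsilon>
    by (rule pos_part_approx[OF assms(1,2) that C])
qed

lemma bounded_transition_kernel_pos_part: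
  fixes k :: "'a::second_countable_topology \<Rightarrow> 'a set \<Rightarrow> real"
  assumes "bounded_transition_kernel k"
  shows "bounded_transition_kernel (\<lambda>x. pos_part (k x))"
proof -
  have sm: "\<And>x. signed_measure (k x)"
    and meas: "\<And>A. A \<in> sets borel \<Longrightarrow> (\<lambda>x. k x A) \<in> borel_measurable borel"
    using assms by (auto simp: bounded_transition_kernel_def transition_kernel_def)
  obtain K where K: "\<And>x. tv_norm (k x) \<le> K"
    using assms by (auto simp: bounded_transition_kernel_def)
  obtain C :: "nat \<Rightarrow> 'a set" where C: "borel_approximating C"
    using ex_borel_approximating by blast
  have "(\<lambda>x. pos_part (k x) A) \<in> borel_measurable borel" if "A \<in> sets borel" for A
  proof (rule borel_measurable_LIMSEQ_real)
    show "(\<lambda>m. max_upto (\<lambda>n. k x (C n \<inter> A)) m) \<longlonglongrightarrow> pos_part (k x) A" for x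
      by (rule pos_part_max_upto_LIMSEQ[OF sm that C])
    show "(\<lambda>x. max_upto (\<lambda>n. k x (C n \<inter> A)) m) \<in> borel_measurable borel" for m
      using C that by (intro borel_measurable_max_upto meas) (auto simp: borel_approximating_def)
  qed
  moreover have "tv_norm (pos_part (k x)) \<le> K" for x
  proof -
    have "\<forall>X\<in>sets borel. 0 \<le> pos_part (k x) X" using pos_part_nonneg[OF sm] by blast
    then have "tv_norm (pos_part (k x)) = pos_part (k x) UNIV"
      using pos_part_eq_self[OF signed_measure_pos_part[OF sm]] neg_part_eq_0[OF signed_measure_pos_part[OF sm]]
      by (simp add: tv_norm_def)
    then show ?thesis using pos_part_le_tv_norm[OF sm[of x], of UNIV] K[of x] by simp
  qed
  ultimately show ?thesis
    using signed_measure_pos_part[OF sm]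
    unfolding bounded_transition_kernel_def transition_kernel_def by blast
qed

lemma bounded_meas_opD:
  assumes "bounded_meas_op S"
  shows "signed_measure \<mu> \<Longrightarrow> signed_measure (S \<mu>)"
    and "signed_measure \<mu> \<Longrightarrow> signed_measure \<nu> \<Longrightarrow> A \<in> sets borel \<Longrightarrow>
      S (\<lambda>B. a * \<mu> B + b * \<nu> B) A = a * S \<mu> A + b * S \<nu> A"
    and "\<exists>K. \<forall>\<mu>. signed_measure \<mu> \<longrightarrow> tv_norm (S \<mu>) \<le> K * tv_norm \<mu>"
  using assms unfolding bounded_meas_op_def by blast+

lemma bounded_meas_op_cong:
  assumes S: "bounded_meas_op S" and "signed_measure \<mu>" "signed_measure \<mu>'"
    and "\<forall>B\<in>sets borel. \<mu> B = \<mu>' B" and "A \<in> sets borel"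
  shows "S \<mu> A = S \<mu>' A"
proof -
  define \<nu> where "\<nu> = (\<lambda>B. 1 * \<mu> B + (-1) * \<mu>' B)"
  have \<nu>: "signed_measure \<nu>" unfolding \<nu>_def using assms(2,3) by (rule signed_measure_linear)
  have "tv_norm \<nu> \<le> 2 * 0"
    using assms(4) by (intro tv_norm_le_of_abs_le) (simp add: \<nu>_def)
  moreover obtain K where "tv_norm (S \<nu>) \<le> K * tv_norm \<nu>"
    using bounded_meas_opD(3)[OF S] \<nu> by blast
  moreover have "S \<nu> A = 1 * S \<mu> A + (-1) * S \<mu>' A"
    unfolding \<nu>_def by (rule bounded_meas_opD(2)[OF S assms(2,3,5)])
  moreover have "\<bar>S \<nu> A\<bar> \<le> tv_norm (S \<nu>)"
    by (rule abs_le_tv_norm[OF bounded_meas_opD(1)[OF S \<nu>] assms(5)])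
  ultimately show ?thesis using tv_norm_nonneg[OF \<nu>] by simp
qed

lemma bounded_meas_op_restrict_split:
  assumes S: "bounded_meas_op S" and "signed_measure \<mu>" "E \<in> sets borel" "A \<in> sets borel"
  shows "S \<mu> A = S (\<lambda>B. \<mu> (B \<inter> E)) A + S (\<lambda>B. \<mu> (B \<inter> - E)) A"
proof -
  have "- E \<in> sets borel" using assms(3) by simp
  then have sm: "signed_measure (\<lambda>B. \<mu> (B \<inter> E))" "signed_measure (\<lambda>B. \<mu> (B \<inter> - E))"
    using signed_measure_restrict[OF assms(2)] assms(3) by blast+
  have "\<forall>B\<in>sets borel. \<mu> B = 1 * \<mu> (B \<inter> E) + 1 * \<mu> (B \<inter> - E)"
    using signed_measure_Int_Diff[OF assms(2) _ assms(3)] by (simp add: Diff_eq)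
  then have "S \<mu> A = S (\<lambda>B. 1 * \<mu> (B \<inter> E) + 1 * \<mu> (B \<inter> - E)) A"
    by (rule bounded_meas_op_cong[OF S assms(2) signed_measure_linear[OF sm] _ assms(4)])
  also have "\<dots> = S (\<lambda>B. \<mu> (B \<inter> E)) A + S (\<lambda>B. \<mu> (B \<inter> - E)) A"
    using bounded_meas_opD(2)[OF S sm assms(4), of 1 1] by (simp only: mult_1)
  finally show ?thesis .
qed

lemma positive_op_mono:
  assumes "bounded_meas_op S" "op_le zero_op S" "signed_measure \<mu>" "\<forall>X\<in>sets borel. 0 \<le> \<mu> X"
    and "A \<in> sets borel" "D \<in> sets borel" "D \<subseteq> A"
  shows "S \<mu> D \<le> S \<mu> A"
  using bounded_meas_opD(1)[OF assms(1,3)] assms(2-)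
  by (intro signed_measure_mono) (auto simp: op_le_def zero_op_def)

section \<open>The positive part of a kernel operator\<close>

lemma abs_max_upto_le: "0 \<le> K \<Longrightarrow> (\<And>n. \<bar>a n\<bar> \<le> K) \<Longrightarrow> \<bar>max_upto a n\<bar> \<le> K"
  using max_upto_nonneg[of a n] max_upto_le[of K a n] by (simp add: abs_le_iff)

text \<open>The induction runs over all positive \<open>\<nu>\<close> at once, because the step restricts \<open>\<nu>\<close> to
  the set where the new term \<open>k x (C n \<inter> A)\<close> exceeds the previous maximum.\<close>

lemma integral_max_upto_kernel_le:
  assumes k: "bounded_transition_kernel k"
    and S: "bounded_meas_op S" "op_le (kernel_op k) S" "op_le zero_op S"
    and C: "\<And>n. C n \<in> sets borel" and A: "A \<in> sets borel"
  shows "signed_measure \<nu> \<Longrightarrow> \<forall>X\<in>sets borel. 0 \<le> \<nu> X \<Longrightarrow>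
    integral\<^sup>L (pos_meas \<nu>) (\<lambda>x. max_upto (\<lambda>i. k x (C i \<inter> A)) n) \<le> S \<nu> A"
proof (induction n arbitrary: \<nu>)
  case 0
  then show ?case using S(3) A by (simp add: op_le_def zero_op_def)
next
  case (Suc n)
  obtain K where "\<And>x. signed_measure (k x)"
    and meas: "\<And>A. A \<in> sets borel \<Longrightarrow> (\<lambda>x. k x A) \<in> borel_measurable borel"
    and bound: "\<And>x A. A \<in> sets borel \<Longrightarrow> \<bar>k x A\<bar> \<le> K" and "0 \<le> K"
    by (rule bounded_transition_kernelE[OF k]) blast
  define H where "H x = max_upto (\<lambda>i. k x (C i \<inter> A)) n" for x
  define D where "D = C n \<inter> A"
  define E where "E = {x. H x < k x D}"
  have D: "D \<in> sets borel" using C A by (simp add: D_def)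
  have H_meas: "H \<in> borel_measurable borel"
    unfolding H_def[abs_def] using C A by (intro borel_measurable_max_upto meas) auto
  have H_bound: "\<bar>H x\<bar> \<le> K" for x
    unfolding H_def using C A \<open>0 \<le> K\<close> by (intro abs_max_upto_le bound) auto
  have E: "E \<in> sets borel" "- E \<in> sets borel"
    unfolding E_def using H_meas meas[OF D] by measurable
  have sm_E: "signed_measure (\<lambda>B. \<nu> (B \<inter> E))" "signed_measure (\<lambda>B. \<nu> (B \<inter> - E))"
    using signed_measure_restrict[OF Suc.prems(1)] E by blast+
  have pos_E: "\<forall>X\<in>sets borel. 0 \<le> \<nu> (X \<inter> E)" "\<forall>X\<in>sets borel. 0 \<le> \<nu> (X \<inter> - E)"
    using Suc.prems(2) E by auto
  have "(\<lambda>x. max_upto (\<lambda>i. k x (C i \<inter> A)) (Suc n)) = (\<lambda>x. indicator E x * k x D + indicator (- E) x * H x)"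
    by (auto simp: fun_eq_iff H_def D_def E_def indicator_def max_def)
  then have "integral\<^sup>L (pos_meas \<nu>) (\<lambda>x. max_upto (\<lambda>i. k x (C i \<inter> A)) (Suc n))
      = integral\<^sup>L (pos_meas \<nu>) (\<lambda>x. indicator E x * k x D) + integral\<^sup>L (pos_meas \<nu>) (\<lambda>x. indicator (- E) x * H x)"
    using E H_meas H_bound meas[OF D] bound[OF D] \<open>0 \<le> K\<close>
    by (simp only:) (intro Bochner_Integration.integral_add integrable_bounded_pos_meas[OF Suc.prems(1),
        where K = K]; auto simp: indicator_def)
  also have "\<dots> = kernel_op k (\<lambda>B. \<nu> (B \<inter> E)) D + integral\<^sup>L (pos_meas (\<lambda>B. \<nu> (B \<inter> - E))) H"
    using integral_pos_meas_restrict[OF Suc.prems E(1) meas[OF D]]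
      integral_pos_meas_restrict[OF Suc.prems E(2) H_meas]
      kernel_op_nonneg_measure[OF sm_E(1) pos_E(1)] by simp
  also have "\<dots> \<le> S (\<lambda>B. \<nu> (B \<inter> E)) D + S (\<lambda>B. \<nu> (B \<inter> - E)) A"
    using S(2) sm_E pos_E D Suc.IH[OF sm_E(2) pos_E(2)] unfolding op_le_def H_def
    by (intro add_mono) auto
  also have "\<dots> \<le> S (\<lambda>B. \<nu> (B \<inter> E)) A + S (\<lambda>B. \<nu> (B \<inter> - E)) A"
    using positive_op_mono[OF S(1,3) sm_E(1) pos_E(1) A D] by (simp add: D_def)
  also have "\<dots> = S \<nu> A"
    using bounded_meas_op_restrict_split[OF S(1) Suc.prems(1) E(1) A] by simp
  finally show ?case .
qed

lemma kernel_op_pos_part_least: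
  fixes k :: "'a::second_countable_topology \<Rightarrow> 'a set \<Rightarrow> real"
  assumes k: "bounded_transition_kernel k"
    and S: "bounded_meas_op S" "op_le (kernel_op k) S" "op_le zero_op S"
  shows "op_le (kernel_op (\<lambda>x. pos_part (k x))) S"
  unfolding op_le_def
proof (intro allI impI ballI)
  fix \<nu> :: "'a set \<Rightarrow> real" and A :: "'a set"
  assume \<nu>: "signed_measure \<nu>" "\<forall>X\<in>sets borel. 0 \<le> \<nu> X" and A: "A \<in> sets borel"
  obtain K where sm: "\<And>x. signed_measure (k x)"
    and meas: "\<And>A. A \<in> sets borel \<Longrightarrow> (\<lambda>x. k x A) \<in> borel_measurable borel"
    and bound: "\<And>x A. A \<in> sets borel \<Longrightarrow> \<bar>k x A\<bar> \<le> K" and "0 \<le> K"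
    by (rule bounded_transition_kernelE[OF k]) blast
  obtain C :: "nat \<Rightarrow> 'a set" where C: "borel_approximating C"
    using ex_borel_approximating by blast
  have C_borel: "C n \<in> sets borel" for n
    using C by (auto simp: borel_approximating_def)
  have lim: "(\<lambda>n. integral\<^sup>L (pos_meas \<nu>) (\<lambda>x. max_upto (\<lambda>i. k x (C i \<inter> A)) n))
      \<longlonglongrightarrow> integral\<^sup>L (pos_meas \<nu>) (\<lambda>x. pos_part (k x) A)"
  proof (rule integral_dominated_convergence[where w = "\<lambda>_. K"])
    show "(\<lambda>x. pos_part (k x) A) \<in> borel_measurable (pos_meas \<nu>)"
      using bounded_transition_kernel_pos_part[OF k] A
      by (simp add: bounded_transition_kernel_def transition_kernel_def)
    show "(\<lambda>x. max_upto (\<lambda>i. k x (C i \<inter> A)) n) \<in> borel_measurable (pos_meas \<nu>)" for n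
      unfolding measurable_pos_meas using C_borel A by (intro borel_measurable_max_upto meas) auto
    show "integrable (pos_meas \<nu>) (\<lambda>_. K)"
      using finite_measure.integrable_const[OF finite_measure_pos_meas[OF \<nu>(1)]] .
    show "AE x in pos_meas \<nu>. (\<lambda>n. max_upto (\<lambda>i. k x (C i \<inter> A)) n) \<longlonglongrightarrow> pos_part (k x) A"
      using pos_part_max_upto_LIMSEQ[OF sm A C] by (intro AE_I2)
    have "\<bar>max_upto (\<lambda>i. k x (C i \<inter> A)) n\<bar> \<le> K" for x n
      using C_borel A \<open>0 \<le> K\<close> by (intro abs_max_upto_le bound) auto
    then show "AE x in pos_meas \<nu>. norm (max_upto (\<lambda>i. k x (C i \<inter> A)) n) \<le> K" for n
      by simp
  qed
  have "integral\<^sup>L (pos_meas \<nu>) (\<lambda>x. pos_part (k x) A) \<le> S \<nu> A"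
  proof (rule LIMSEQ_le_const2[OF lim], intro exI allI impI)
    show "integral\<^sup>L (pos_meas \<nu>) (\<lambda>x. max_upto (\<lambda>i. k x (C i \<inter> A)) n) \<le> S \<nu> A" for n
      by (rule integral_max_upto_kernel_le[OF k S C_borel A \<nu>])
  qed
  then show "kernel_op (\<lambda>x. pos_part (k x)) \<nu> A \<le> S \<nu> A"
    by (simp add: kernel_op_nonneg_measure[OF \<nu>])
qed

lemma is_pos_part_op_kernel_op:
  fixes k :: "'a::second_countable_topology \<Rightarrow> 'a set \<Rightarrow> real"
  assumes k: "bounded_transition_kernel k"
  shows "is_pos_part_op (kernel_op k) (kernel_op (\<lambda>x. pos_part (k x)))"
proof -
  have k_pos: "bounded_transition_kernel (\<lambda>x. pos_part (k x))"
    by (rule bounded_transition_kernel_pos_part[OF k])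
  have sm: "signed_measure (k x)" for x
    using k by (simp add: bounded_transition_kernel_def transition_kernel_def)
  have "k x A \<le> pos_part (k x) A" if "A \<in> sets borel" for x A
    using le_pos_part[OF sm that order_refl] .
  then have "op_le (kernel_op k) (kernel_op (\<lambda>x. pos_part (k x)))"
    by (rule op_le_kernel_op[OF k k_pos])
  moreover have "op_le zero_op (kernel_op (\<lambda>x. pos_part (k x)))"
    using pos_part_nonneg[OF sm] by (rule op_le_zero_kernel_op)
  ultimately show ?thesis
    unfolding is_pos_part_op_def
    using bounded_meas_op_kernel_op[OF k_pos] kernel_op_pos_part_least[OF k] by blast
qed

theorem theorem3p3:
  fixes T :: "('a::polish_space) meas_op"
    and k :: "'a \<Rightarrow> 'a set \<Rightarrow> real"
  assumes "weakly_continuous_with_kernel T k"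
  shows "is_pos_part_op T (\<lambda>\<mu> A. sintegral \<mu> (\<lambda>x. pos_part (k x) A))
       \<and> weakly_continuous_with_kernel (\<lambda>\<mu> A. sintegral \<mu> (\<lambda>x. pos_part (k x) A))
            (\<lambda>x. pos_part (k x))"
proof -
  have k: "bounded_transition_kernel k"
    and T: "\<And>\<mu> A. signed_measure \<mu> \<Longrightarrow> A \<in> sets borel \<Longrightarrow> T \<mu> A = kernel_op k \<mu> A"
    using assms by (auto simp: weakly_continuous_with_kernel_def kernel_op_def)
  have "op_le T S \<longleftrightarrow> op_le (kernel_op k) S" for S
    by (auto simp: op_le_def T)
  then have "is_pos_part_op T (kernel_op (\<lambda>x. pos_part (k x)))"
    using is_pos_part_op_kernel_op[OF k] by (simp add: is_pos_part_op_def)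
  moreover have "weakly_continuous_with_kernel (kernel_op (\<lambda>x. pos_part (k x))) (\<lambda>x. pos_part (k x))"
    using bounded_transition_kernel_pos_part[OF k]
    by (simp add: weakly_continuous_with_kernel_def kernel_op_def)
  moreover have "(\<lambda>\<mu> A. sintegral \<mu> (\<lambda>x. pos_part (k x) A)) = kernel_op (\<lambda>x. pos_part (k x))"
    by (simp add: kernel_op_def fun_eq_iff)
  ultimately show ?thesis by simp
qed

end
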